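(* The following two statements are equivalent. (a) No Shapiro–Shields function has an extraneous reproducible zero; that is, for every reproducible multiset $Z$ there is no reproducible point $\beta$ such that either ($\beta\notin Z$ and $\mathcal S_Z(\beta)=0$) or ($\beta$ appears in $Z$ exactly $m$ times, $\beta$ is reproducible of order $m$, and $\mathcal S_Z^{(m)}(\beta)=0$). (b) For any two nonzero polynomials $p$ and $q$, with $d_p=\operatorname{ord}_0(p)$ and $d_q=\operatorname{ord}_0(q)$, if $\Pi_{[p]}\big(k_0^{(d_p)}\big)=\Pi_{[q]}\big(k_0^{(d_q)}\big)$, then $[p]=[q]$.
   Context: Standing assumptions: $\Omega\subset\mathbb C$ is a domain with $0\in\Omega$, $\mathcal H$ is a Hilbert space of analytic functions on $\Omega$ with bounded point evaluations at points of $\Omega$, the shift $(Sf)(z)=zf(z)$ is bounded on $\mathcal H$, and the polynomials $\mathcal P$ are dense in $\mathcal H$. $[g]$ is the closure of $\operatorname{span}\{z^kg:k\ge0\}$; $\Pi_V$ is orthogonal projection; $\operatorname{ord}_0$ is the order of vanishing at $0$. A point $\beta\in\mathbb C$ is reproducible of order $m\ge0$ if $p\mapsto p^{(m)}(\beta)$ on $\mathcal P$ extends to a bounded linear functional on $\mathcal H$; the value of the extension at $g\in\mathcal H$ is written $g^{(m)}(\beta)$ and it is represented by $k_\beta^{(m)}\in\mathcal H$. $\beta$ is a reproducible point if reproducible of order $0$; reproducibility of order $m$ implies that of all orders $j\le m$; $\operatorname{ro}(\beta)$ is the supremum of orders of reproducibility. A reproducible multiset is a finite multiset consisting of $0$ with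 multiplicity $m_0\ge0$ and distinct nonzero reproducible points $\beta_1,\dots,\beta_s$ with multiplicities $1\le m_j\le\operatorname{ro}(\beta_j)+1$. For vectors $u,v_1,\dots,v_N$, $D(u;v_1,\dots,v_N)$ is the formal determinant of the matrix with first row $(u,\langle u,v_1\rangle,\dots,\langle u,v_N\rangle)$ and $(i+1)$-st row $(v_i,\langle v_i,v_1\rangle,\dots,\langle v_i,v_N\rangle)$, expanded along the first column. The Shapiro–Shields function of $Z$ is $\mathcal S_Z=D(k_0^{(m_0)};k_0^{(m_0-1)},\dots,k_0,k_{\beta_1}^{(m_1-1)},\dots,k_{\beta_1},\dots,k_{\beta_s}^{(m_s-1)},\dots,k_{\beta_s})$. *)

theory Defs
  imports "HOL-Complex_Analysis.Complex_Analysis" "HOL-Computational_Algebra.Polynomial"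
    "HOL-Library.Multiset" "Jordan_Normal_Form.Determinant"
begin

text \<open>Elements of the Hilbert space are functions complex => complex that are
  analytic on the domain Om and vanish outside Om (so that a function is determined
  by its restriction to Om). The inner product ip is linear in the first argument.\<close>

type_synonym cfun = "complex \<Rightarrow> complex"

definition hnorm :: "(cfun \<Rightarrow> cfun \<Rightarrow> complex) \<Rightarrow> cfun \<Rightarrow> real" where
  "hnorm ip f = sqrt (Re (ip f f))"

definition polyfun :: "complex set \<Rightarrow> complex poly \<Rightarrow> cfun" where
  "polyfun Om p = (\<lambda>z. if z \<in> Om then poly p z else 0)"

definition shift :: "complex set \<Rightarrow> cfun \<Rightarrow> cfun" where
  "shift Om f = (\<lambda>z. if z \<in> Om then z * f z else 0)"

definition setting :: "complex set \<Rightarrow> cfun set \<Rightarrow> (cfun \<Rightarrow> cfun \<Rightarrow> complex) \<Rightarrow> bool" where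
  "setting Om H ip \<longleftrightarrow>
     open Om \<and> connected Om \<and> 0 \<in> Om \<and>
     (\<forall>f\<in>H. f holomorphic_on Om \<and> (\<forall>z. z \<notin> Om \<longrightarrow> f z = 0)) \<and>
     (\<lambda>z. 0) \<in> H \<and>
     (\<forall>f\<in>H. \<forall>g\<in>H. (\<lambda>z. f z + g z) \<in> H) \<and>
     (\<forall>f\<in>H. \<forall>c. (\<lambda>z. c * f z) \<in> H) \<and>
     (\<forall>f\<in>H. \<forall>g\<in>H. \<forall>h\<in>H. ip (\<lambda>z. f z + g z) h = ip f h + ip g h) \<and>
     (\<forall>f\<in>H. \<forall>g\<in>H. \<forall>c. ip (\<lambda>z. c * f z) g = c * ip f g) \<and>
     (\<forall>f\<in>H. \<forall>g\<in>H. ip g f = cnj (ip f g)) \<and>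
     (\<forall>f\<in>H. Im (ip f f) = 0 \<and> Re (ip f f) \<ge> 0) \<and>
     (\<forall>f\<in>H. ip f f = 0 \<longrightarrow> f = (\<lambda>z. 0)) \<and>
     \<comment> \<open>completeness\<close>
     (\<forall>X. (\<forall>n. X n \<in> H) \<and>
          (\<forall>e>0. \<exists>N. \<forall>m\<ge>N. \<forall>n\<ge>N. hnorm ip (\<lambda>z. X m z - X n z) < e) \<longrightarrow>
          (\<exists>f\<in>H. (\<lambda>n. hnorm ip (\<lambda>z. X n z - f z)) \<longlonglongrightarrow> 0)) \<and>
     \<comment> \<open>bounded point evaluations on Om\<close>
     (\<forall>w\<in>Om. \<exists>C. \<forall>f\<in>H. cmod (f w) \<le> C * hnorm ip f) \<and>
     \<comment> \<open>the shift is a bounded operator on H\<close>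
     (\<forall>f\<in>H. shift Om f \<in> H) \<and>
     (\<exists>C. \<forall>f\<in>H. hnorm ip (shift Om f) \<le> C * hnorm ip f) \<and>
     \<comment> \<open>polynomials belong to H and are dense\<close>
     (\<forall>p. polyfun Om p \<in> H) \<and>
     (\<forall>f\<in>H. \<forall>e>0. \<exists>p. hnorm ip (\<lambda>z. f z - polyfun Om p z) < e)"

definition reproducible_order ::
  "complex set \<Rightarrow> (cfun \<Rightarrow> cfun \<Rightarrow> complex) \<Rightarrow> complex \<Rightarrow> nat \<Rightarrow> bool" where
  "reproducible_order Om ip \<beta> m \<longleftrightarrow>
     (\<exists>C. \<forall>p. cmod (poly ((pderiv ^^ m) p) \<beta>) \<le> C * hnorm ip (polyfun Om p))"

definition reproducible :: "complex set \<Rightarrow> (cfun \<Rightarrow> cfun \<Rightarrow> complex) \<Rightarrow> complex \<Rightarrow> bool" where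
  "reproducible Om ip \<beta> \<longleftrightarrow> reproducible_order Om ip \<beta> 0"

definition kern ::
  "complex set \<Rightarrow> cfun set \<Rightarrow> (cfun \<Rightarrow> cfun \<Rightarrow> complex) \<Rightarrow> complex \<Rightarrow> nat \<Rightarrow> cfun" where
  "kern Om H ip \<beta> m =
     (SOME k. k \<in> H \<and> (\<forall>p. ip (polyfun Om p) k = poly ((pderiv ^^ m) p) \<beta>))"

text \<open>g^(m)(beta), the value of the bounded extension at g.\<close>
definition deriv_at ::
  "complex set \<Rightarrow> cfun set \<Rightarrow> (cfun \<Rightarrow> cfun \<Rightarrow> complex) \<Rightarrow> cfun \<Rightarrow> complex \<Rightarrow> nat \<Rightarrow> complex" where
  "deriv_at Om H ip g \<beta> m = ip g (kern Om H ip \<beta> m)"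

definition reproducible_multiset ::
  "complex set \<Rightarrow> (cfun \<Rightarrow> cfun \<Rightarrow> complex) \<Rightarrow> complex multiset \<Rightarrow> bool" where
  "reproducible_multiset Om ip Z \<longleftrightarrow>
     (\<forall>\<beta>. \<beta> \<in># Z \<longrightarrow> \<beta> \<noteq> 0 \<longrightarrow> reproducible_order Om ip \<beta> (count Z \<beta> - 1))"

text \<open>Formal determinant D(u; v_1,...,v_N), expanded along the first column.
  Row i (i = 0..N) has first entry w_i (w_0 = u, w_i = v_i) and entries <w_i, v_c>.\<close>
definition Dfun :: "(cfun \<Rightarrow> cfun \<Rightarrow> complex) \<Rightarrow> cfun \<Rightarrow> cfun list \<Rightarrow> cfun" where
  "Dfun ip u vs =
     (let N = length vs;
          w = (\<lambda>i. if i = 0 then u else vs ! (i - 1))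
      in (\<lambda>z. \<Sum>i\<le>N. (-1) ^ i *
               det (mat N N (\<lambda>(r, c). ip (w (if r < i then r else Suc r)) (vs ! c))) * w i z))"

text \<open>The list of kernels k_beta^(j), j < mult(beta),
  is enumerated in some order; the determinant does not depend on the order
  (a simultaneous permutation of rows and columns of the Gram block).\<close>
definition SS_fun ::
  "complex set \<Rightarrow> cfun set \<Rightarrow> (cfun \<Rightarrow> cfun \<Rightarrow> complex) \<Rightarrow> complex multiset \<Rightarrow> cfun" where
  "SS_fun Om H ip Z =
     (let xs = (SOME xs. distinct xs \<and> set xs = {(\<beta>, j). \<beta> \<in># Z \<and> j < count Z \<beta>})
      in Dfun ip (kern Om H ip 0 (count Z 0)) (map (\<lambda>(\<beta>, j). kern Om H ip \<beta> j) xs))"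

definition hclosure :: "cfun set \<Rightarrow> (cfun \<Rightarrow> cfun \<Rightarrow> complex) \<Rightarrow> cfun set \<Rightarrow> cfun set" where
  "hclosure H ip A = {f \<in> H. \<forall>e>0. \<exists>a\<in>A. hnorm ip (\<lambda>z. f z - a z) < e}"

definition invsub :: "cfun set \<Rightarrow> (cfun \<Rightarrow> cfun \<Rightarrow> complex) \<Rightarrow> cfun \<Rightarrow> cfun set" where
  "invsub H ip g = hclosure H ip {(\<lambda>z. \<Sum>k<n. c k * z ^ k * g z) | n c. True}"

definition proj :: "(cfun \<Rightarrow> cfun \<Rightarrow> complex) \<Rightarrow> cfun set \<Rightarrow> cfun \<Rightarrow> cfun" where
  "proj ip V x = (THE v. v \<in> V \<and> (\<forall>w\<in>V. ip (\<lambda>z. x z - v z) w = 0))"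

end

theory Submission
  imports Defs "HOL-Computational_Algebra.Fundamental_Theorem_Algebra"
begin

lemma higher_pderiv_diff:
  "(pderiv ^^ n) (p - q) = (pderiv ^^ n) p - (pderiv ^^ n) (q :: 'a :: idom poly)"
  by (induction n) (simp_all add: pderiv_diff)

lemma higher_pderiv_eq_0: "degree p < n \<Longrightarrow> (pderiv ^^ n) p = 0"
  by (intro poly_eqI) (simp add: coeff_higher_pderiv coeff_eq_0)

lemma poly_higher_pderiv_order:
  fixes p :: "'a :: {idom, semiring_char_0} poly"
  assumes "p \<noteq> 0"
  shows "\<forall>j < order a p. poly ((pderiv ^^ j) p) a = 0" and "poly ((pderiv ^^ order a p) p) a \<noteq> 0"
proof -
  have "(\<forall>j<n. poly ((pderiv ^^ j) p) a = 0) \<and> poly ((pderiv ^^ n) p) a \<noteq> 0"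
    if "order a p = n" "p \<noteq> 0" for n and p :: "'a poly"
    using that
  proof (induction n arbitrary: p)
    case 0
    then show ?case using order_root[of p a] by auto
  next
    case (Suc n)
    have root: "poly p a = 0"
      using Suc.prems order_root[of p a] by auto
    have "degree p \<noteq> 0"
    proof
      assume "degree p = 0"
      then obtain c where "p = [:c:]" by (rule degree_eq_zeroE)
      then show False using root Suc.prems(2) by simp
    qed
    then have "pderiv p \<noteq> 0"
      by (simp add: pderiv_eq_0_iff)
    moreover have "order a (pderiv p) = n"
      using order_pderiv[OF Suc.prems(2) root] Suc.prems(1) by simp
    ultimately have "(\<forall>j<n. poly ((pderiv ^^ Suc j) p) a = 0) \<and> poly ((pderiv ^^ Suc n) p) a \<noteq> 0"
      using Suc.IH by (simp add: funpow_Suc_right del: funpow.simps)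
    then show ?case
      using root by (auto simp: less_Suc_eq_0_disj)
  qed
  then show "\<forall>j < order a p. poly ((pderiv ^^ j) p) a = 0" "poly ((pderiv ^^ order a p) p) a \<noteq> 0"
    using assms by blast+
qed

lemma linear_power_dvd_iff_higher_pderivs:
  fixes p :: "'a :: {idom, semiring_char_0} poly"
  shows "[:-a, 1:] ^ n dvd p \<longleftrightarrow> (\<forall>j<n. poly ((pderiv ^^ j) p) a = 0)"
proof (cases "p = 0")
  case False
  have "n \<le> order a p \<longleftrightarrow> (\<forall>j<n. poly ((pderiv ^^ j) p) a = 0)"
  proof
    assume "n \<le> order a p"
    then show "\<forall>j<n. poly ((pderiv ^^ j) p) a = 0"
      using poly_higher_pderiv_order(1)[OF False] by auto
  next
    assume "\<forall>j<n. poly ((pderiv ^^ j) p) a = 0"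
    then show "n \<le> order a p"
      using poly_higher_pderiv_order(2)[OF False] not_less by blast
  qed
  then show ?thesis
    using False by (simp add: order_divides)
qed simp

lemma poly_higher_pderiv_eq_0_if_dvd:
  fixes p :: "'a :: {idom, semiring_char_0} poly"
  shows "[:-a, 1:] ^ n dvd p \<Longrightarrow> j < n \<Longrightarrow> poly ((pderiv ^^ j) p) a = 0"
  using linear_power_dvd_iff_higher_pderivs by blast

lemma poly_higher_pderiv_linear_power:
  "poly ((pderiv ^^ j) ([:-a, 1:] ^ i)) a = (if i = j then fact j else (0 :: 'a :: {idom, semiring_char_0}))"
proof -
  have "(pderiv ^^ n) ([:-a, 1:] ^ n) = [:fact n :: 'a:]" for n
  proof (induction n)
    case (Suc n)
    have "pderiv ([:-a, 1:] ^ Suc n) = Polynomial.smult (of_nat (Suc n)) ([:-a, 1:] ^ n :: 'a poly)"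
      by (simp add: pderiv_power_Suc pderiv_pCons del: power_Suc)
    then show ?case
      by (simp add: funpow_Suc_right higher_pderiv_smult Suc.IH del: funpow.simps)
  qed simp
  moreover have "poly ((pderiv ^^ j) ([:-a, 1:] ^ i)) a = 0" if "i \<noteq> j"
  proof (cases "j < i")
    case True
    then show ?thesis by (intro poly_higher_pderiv_eq_0_if_dvd) auto
  next
    case False
    then show ?thesis using that by (simp add: higher_pderiv_eq_0 degree_linear_power)
  qed
  ultimately show ?thesis by simp
qed

lemma poly_higher_pderiv_linear_power_mult:
  fixes r :: "'a :: {idom, semiring_char_0} poly"
  shows "poly ((pderiv ^^ m) ([:-a, 1:] ^ m * r)) a = fact m * poly r a"
proof -
  define L where "L = [:-a, 1:]"
  define s where "s = synthetic_div r a"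
  define c where "c = poly r a"
  have "r = L * s + [:c:]"
    by (simp only: L_def s_def c_def synthetic_div_correct')
  then have "L ^ m * r = L ^ Suc m * s + Polynomial.smult c (L ^ m)"
    by (simp add: distrib_left mult.assoc mult.left_commute)
  moreover have "poly ((pderiv ^^ m) (L ^ Suc m * s)) a = 0"
    unfolding L_def by (rule poly_higher_pderiv_eq_0_if_dvd[of _ "Suc m"]) simp_all
  ultimately show ?thesis
    by (simp add: L_def c_def higher_pderiv_add higher_pderiv_smult poly_higher_pderiv_linear_power)
qed

lemma poly_higher_pderiv_linear_mult:
  fixes p :: "'a :: idom poly"
  shows "poly ((pderiv ^^ Suc n) ([:-a, 1:] * p)) a = of_nat (Suc n) * poly ((pderiv ^^ n) p) a"
proof -
  have "(pderiv ^^ Suc n) (L * p) =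
      L * (pderiv ^^ Suc n) p + Polynomial.smult (of_nat (Suc n)) ((pderiv ^^ n) p)"
    if "pderiv L = 1" for L :: "'a poly"
  proof (induction n)
    case (Suc n)
    then show ?case
      using that by (simp add: pderiv_mult pderiv_add pderiv_smult of_nat_Suc[of "Suc n"]
          smult_add_left add.assoc del: of_nat_Suc)
  qed (use that in \<open>simp add: pderiv_mult\<close>)
  moreover have "pderiv [:-a, 1:] = (1 :: 'a poly)"
    by (simp add: pderiv_pCons)
  ultimately have "(pderiv ^^ Suc n) ([:-a, 1:] * p) =
      [:-a, 1:] * (pderiv ^^ Suc n) p + Polynomial.smult (of_nat (Suc n)) ((pderiv ^^ n) p)"
    by blast
  then show ?thesis
    by (simp only: poly_add poly_mult poly_smult) simp
qed

lemma taylor_expansion_linear_powers: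
  fixes T :: "'a :: field_char_0 poly"
  assumes "T = 0 \<or> degree T < m"
  shows "T = (\<Sum>i<m. Polynomial.smult (poly ((pderiv ^^ i) T) a / fact i) ([:-a, 1:] ^ i))"
    (is "T = ?S")
proof -
  have "poly ((pderiv ^^ j) ?S) a = poly ((pderiv ^^ j) T) a" if "j < m" for j
  proof -
    have "poly ((pderiv ^^ j) ?S) a =
        (\<Sum>i<m. poly ((pderiv ^^ i) T) a / fact i * poly ((pderiv ^^ j) ([:-a, 1:] ^ i)) a)"
      by (simp add: higher_pderiv_sum higher_pderiv_smult poly_sum)
    also have "\<dots> = (\<Sum>i<m. if i = j then poly ((pderiv ^^ j) T) a else 0)"
      by (intro sum.cong) (simp_all add: poly_higher_pderiv_linear_power)
    finally show ?thesis
      using that by simp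
  qed
  then have dvd: "[:-a, 1:] ^ m dvd T - ?S"
    by (simp add: linear_power_dvd_iff_higher_pderivs higher_pderiv_diff)
  have deg: "T - ?S = 0 \<or> degree (T - ?S) < m"
  proof (cases "m = 0")
    case False
    have "degree ?S \<le> m - 1"
      by (intro degree_sum_le) (auto intro: order.trans[OF degree_smult_le] simp: degree_linear_power)
    moreover have "degree T \<le> m - 1"
      using assms False by auto
    ultimately show ?thesis
      using False degree_diff_le[of T "m - 1" ?S] by linarith
  qed (use assms in simp)
  have "T - ?S = 0"
  proof (rule ccontr)
    assume "T - ?S \<noteq> 0"
    then have "m \<le> degree (T - ?S)"
      using dvd_imp_degree_le[OF dvd] by (simp add: degree_linear_power)
    then show False
      using deg \<open>T - ?S \<noteq> 0\<close> by simp
  qed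
  then show ?thesis by simp
qed

definition root_poly :: "'a :: comm_ring_1 multiset \<Rightarrow> 'a poly" where
  "root_poly Z = (\<Prod>\<beta>\<in>#Z. [:-\<beta>, 1:])"

lemma root_poly_empty [simp]: "root_poly {#} = 1"
  by (simp add: root_poly_def)

lemma root_poly_add_mset [simp]: "root_poly (add_mset \<gamma> Z) = [:-\<gamma>, 1:] * root_poly Z"
  by (simp add: root_poly_def)

lemma root_poly_nonzero [simp]: "root_poly Z \<noteq> (0 :: 'a :: idom poly)"
  by (induction Z) (simp_all del: mult_pCons_left)

lemma order_root_poly: "order \<beta> (root_poly Z) = count Z (\<beta> :: 'a :: idom)"
proof (induction Z)
  case (add \<gamma> Z)
  have "order \<beta> [:-\<gamma>, 1:] = (if \<beta> = \<gamma> then 1 else 0)"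
    using order_power_n_n[of \<gamma> 1] by (auto intro: order_0I)
  then show ?case
    using add.IH order_mult[of "[:-\<gamma>, 1:]" "root_poly Z" \<beta>] by (simp del: mult_pCons_left)
qed simp

lemma linear_power_count_dvd_root_poly: "[:-\<beta>, 1:] ^ count Z \<beta> dvd root_poly (Z :: 'a :: idom multiset)"
  using order_1[of \<beta> "root_poly Z"] by (simp add: order_root_poly)

text \<open>The functionals \<open>q \<mapsto> q\<^sup>(\<^sup>j\<^sup>)(\<beta>)\<close> for distinct pairs \<open>(\<beta>, j)\<close> are linearly independent: for the
  pair \<open>(\<beta>, j)\<close> with nonzero coefficient and maximal \<open>j\<close> among those at \<open>\<beta>\<close>, test with a polynomial
  of order exactly \<open>j\<close> at \<open>\<beta>\<close> that vanishes to high order at all other points.\<close>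
lemma higher_pderiv_functionals_independent:
  fixes xs :: "('a :: {idom, semiring_char_0} \<times> nat) list" and x :: "nat \<Rightarrow> 'a"
  assumes dist: "distinct xs"
    and annih: "\<And>q. (\<Sum>c<length xs. x c * poly ((pderiv ^^ snd (xs ! c)) q) (fst (xs ! c))) = 0"
    and "c < length xs"
  shows "x c = 0"
proof (rule ccontr)
  define N where "N = length xs"
  assume "x c \<noteq> 0"
  define bs where "bs = fst (xs ! c)"
  define P where "P = (\<lambda>d. d < N \<and> x d \<noteq> 0 \<and> fst (xs ! d) = bs)"
  have "\<forall>d. P d \<longrightarrow> snd (xs ! d) < Suc (Max (snd ` set xs))"
    by (auto simp: P_def N_def intro!: Max_ge le_imp_less_Suc)
  moreover have "P c"
    using \<open>c < length xs\<close> \<open>x c \<noteq> 0\<close> by (simp add: P_def N_def bs_def)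
  ultimately obtain cs where "P cs" and cs_max: "\<And>d. P d \<Longrightarrow> snd (xs ! d) \<le> snd (xs ! cs)"
    using Lattices_Big.ex_has_greatest_nat[of P c "\<lambda>d. snd (xs ! d)"] by blast
  then have cs: "cs < N" "x cs \<noteq> 0" "fst (xs ! cs) = bs"
    by (simp_all add: P_def)
  define js where "js = snd (xs ! cs)"
  define R where "R = (\<Prod>b \<in> {b \<in> set xs. fst b \<noteq> bs}. [:-fst b, 1:] ^ Suc (snd b))"
  define q where "q = [:-bs, 1:] ^ js * R"
  have "poly R bs \<noteq> 0"
    by (auto simp: R_def poly_prod prod_zero_iff)
  then have "q \<noteq> 0" and "order bs R = 0"
    by (auto simp: q_def intro: order_0I)
  then have "order bs q = js"
    using order_mult[of "[:-bs, 1:] ^ js" R bs] by (simp add: q_def order_power_n_n)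
  then have at_cs: "poly ((pderiv ^^ js) q) bs \<noteq> 0"
    using poly_higher_pderiv_order(2)[OF \<open>q \<noteq> 0\<close>] by metis
  have vanish: "x d * poly ((pderiv ^^ snd (xs ! d)) q) (fst (xs ! d)) = 0" if "d < N" "d \<noteq> cs" for d
  proof (cases "P d")
    case True
    have "xs ! d \<noteq> xs ! cs"
      using nth_eq_iff_index_eq[OF dist] that cs(1) by (simp add: N_def)
    then have "snd (xs ! d) \<noteq> js"
      using True cs(3) by (auto simp: P_def js_def prod_eq_iff)
    then have "snd (xs ! d) < js"
      using cs_max[OF True] by (simp add: js_def)
    moreover have "[:-bs, 1:] ^ js dvd q"
      by (simp add: q_def)
    ultimately show ?thesis
      using True poly_higher_pderiv_eq_0_if_dvd by (metis P_def mult_eq_0_iff)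
  next
    case False
    show ?thesis
    proof (cases "x d = 0")
      case False
      then have "fst (xs ! d) \<noteq> bs"
        using \<open>\<not> P d\<close> \<open>d < N\<close> by (simp add: P_def)
      then have "[:-fst (xs ! d), 1:] ^ Suc (snd (xs ! d)) dvd q"
        unfolding q_def R_def using \<open>d < N\<close>
        by (intro dvd_mult dvd_prodI[where f = "\<lambda>b. [:-fst b, 1:] ^ Suc (snd b)"]) (simp_all add: N_def)
      then show ?thesis
        by (simp add: poly_higher_pderiv_eq_0_if_dvd del: power_Suc)
    qed simp
  qed
  have "(\<Sum>d<N. x d * poly ((pderiv ^^ snd (xs ! d)) q) (fst (xs ! d))) =
      x cs * poly ((pderiv ^^ js) q) bs +
      (\<Sum>d\<in>{..<N} - {cs}. x d * poly ((pderiv ^^ snd (xs ! d)) q) (fst (xs ! d)))"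
    using cs by (simp add: sum.remove js_def)
  also have "(\<Sum>d\<in>{..<N} - {cs}. x d * poly ((pderiv ^^ snd (xs ! d)) q) (fst (xs ! d))) = 0"
    using vanish by (intro sum.neutral) simp
  finally show False
    using annih[of q] cs(2) at_cs unfolding N_def by simp
qed

lemma higher_deriv_poly: "(deriv ^^ m) (poly p) = poly ((pderiv ^^ m) (p :: complex poly))"
proof (induction m)
  case (Suc m)
  have "deriv (poly q) = poly (pderiv q)" for q :: "complex poly"
    by (rule ext) (rule DERIV_imp_deriv[OF poly_DERIV])
  then show ?case
    using Suc by simp
qed simp

abbreviation fadd :: "cfun \<Rightarrow> cfun \<Rightarrow> cfun" where "fadd f g \<equiv> (\<lambda>z. f z + g z)"
abbreviation fdiff :: "cfun \<Rightarrow> cfun \<Rightarrow> cfun" where "fdiff f g \<equiv> (\<lambda>z. f z - g z)"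
abbreviation fscale :: "complex \<Rightarrow> cfun \<Rightarrow> cfun" where "fscale c f \<equiv> (\<lambda>z. c * f z)"
abbreviation fzero :: cfun where "fzero \<equiv> (\<lambda>z. 0)"

lemma polyfun_add: "polyfun Om (p + q) = fadd (polyfun Om p) (polyfun Om q)"
  by (rule ext) (simp add: polyfun_def)

lemma polyfun_diff: "polyfun Om (p - q) = fdiff (polyfun Om p) (polyfun Om q)"
  by (rule ext) (simp add: polyfun_def)

lemma polyfun_smult: "polyfun Om (Polynomial.smult c p) = fscale c (polyfun Om p)"
  by (rule ext) (simp add: polyfun_def)

lemma polyfun_0 [simp]: "polyfun Om 0 = fzero"
  by (rule ext) (simp add: polyfun_def)

definition poly_mult :: "complex poly \<Rightarrow> cfun \<Rightarrow> cfun" where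
  "poly_mult q f = (\<lambda>z. poly q z * f z)"

lemma poly_mult_polyfun: "poly_mult q (polyfun Om r) = polyfun Om (q * r)"
  by (auto simp: poly_mult_def polyfun_def)

lemma poly_mult_diff: "poly_mult q (fdiff f g) = fdiff (poly_mult q f) (poly_mult q g)"
  by (auto simp: poly_mult_def algebra_simps)

definition polyfun_multiples :: "complex set \<Rightarrow> complex poly \<Rightarrow> cfun set" where
  "polyfun_multiples Om p = {polyfun Om (r * p) | r. True}"

locale function_hilbert_space =
  fixes Om :: "complex set" and H :: "cfun set" and ip :: "cfun \<Rightarrow> cfun \<Rightarrow> complex"
  assumes setting: "setting Om H ip"
begin

abbreviation nrm :: "cfun \<Rightarrow> real" where "nrm \<equiv> hnorm ip"

lemmas setting_facts = setting[unfolded setting_def]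

lemma open_Om: "open Om"
  using setting_facts by (elim conjE) blast

lemma zero_in_Om: "0 \<in> Om"
  using setting_facts by (elim conjE) blast

lemma H_holomorphic: "f \<in> H \<Longrightarrow> f holomorphic_on Om"
  using setting_facts by (elim conjE) blast

lemma H_zero_outside: "f \<in> H \<Longrightarrow> z \<notin> Om \<Longrightarrow> f z = 0"
  using setting_facts by (elim conjE) blast

lemma zero_in_H [simp, intro]: "fzero \<in> H"
  using setting_facts by (elim conjE) blast

lemma H_add [intro]: "f \<in> H \<Longrightarrow> g \<in> H \<Longrightarrow> fadd f g \<in> H"
  using setting_facts by (elim conjE) blast

lemma H_scale [intro]: "f \<in> H \<Longrightarrow> fscale c f \<in> H"
  using setting_facts by (elim conjE) blast

lemma ip_add_left: "f \<in> H \<Longrightarrow> g \<in> H \<Longrightarrow> h \<in> H \<Longrightarrow> ip (fadd f g) h = ip f h + ip g h"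
  using setting_facts by (elim conjE) blast

lemma ip_scale_left: "f \<in> H \<Longrightarrow> g \<in> H \<Longrightarrow> ip (fscale c f) g = c * ip f g"
  using setting_facts by (elim conjE) blast

lemma ip_commute: "f \<in> H \<Longrightarrow> g \<in> H \<Longrightarrow> ip g f = cnj (ip f g)"
  using setting_facts by (elim conjE) blast

lemma ip_self_eq_0D: "f \<in> H \<Longrightarrow> ip f f = 0 \<Longrightarrow> f = fzero"
  using setting_facts by (elim conjE) blast

lemma ip_self_real_nonneg: "f \<in> H \<Longrightarrow> Im (ip f f) = 0 \<and> Re (ip f f) \<ge> 0"
  using setting_facts by (elim conjE) blast

lemma ip_self: "f \<in> H \<Longrightarrow> ip f f = of_real (nrm f ^ 2)"
  using ip_self_real_nonneg[of f] by (simp add: hnorm_def complex_eq_iff)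

lemma H_complete:
  assumes "\<And>n. X n \<in> H" and "\<forall>e>0. \<exists>N. \<forall>m\<ge>N. \<forall>n\<ge>N. nrm (fdiff (X m) (X n)) < e"
  shows "\<exists>f\<in>H. (\<lambda>n. nrm (fdiff (X n) f)) \<longlonglongrightarrow> 0"
proof -
  have "\<forall>X. (\<forall>n. X n \<in> H) \<and> (\<forall>e>0. \<exists>N. \<forall>m\<ge>N. \<forall>n\<ge>N. nrm (fdiff (X m) (X n)) < e) \<longrightarrow>
      (\<exists>f\<in>H. (\<lambda>n. nrm (fdiff (X n) f)) \<longlonglongrightarrow> 0)"
    using setting_facts by (elim conjE) assumption
  then show ?thesis
    using assms by blast
qed

lemma point_eval_bounded: "w \<in> Om \<Longrightarrow> \<exists>C. \<forall>f\<in>H. cmod (f w) \<le> C * nrm f"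
proof -
  have "\<forall>w\<in>Om. \<exists>C. \<forall>f\<in>H. cmod (f w) \<le> C * nrm f"
    using setting_facts by (elim conjE) assumption
  then show "w \<in> Om \<Longrightarrow> \<exists>C. \<forall>f\<in>H. cmod (f w) \<le> C * nrm f"
    by blast
qed

lemma shift_in_H: "f \<in> H \<Longrightarrow> shift Om f \<in> H"
proof -
  have "\<forall>f\<in>H. shift Om f \<in> H"
    using setting_facts by (elim conjE) assumption
  then show "f \<in> H \<Longrightarrow> shift Om f \<in> H"
    by blast
qed

lemma shift_bounded: "\<exists>C. \<forall>f\<in>H. nrm (shift Om f) \<le> C * nrm f"
  using setting_facts by (elim conjE) assumption

lemma polyfun_in_H [simp, intro]: "polyfun Om p \<in> H"
proof -
  have "\<forall>p. polyfun Om p \<in> H"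
    using setting_facts by (elim conjE) assumption
  then show ?thesis ..
qed

lemma polyfun_dense: "f \<in> H \<Longrightarrow> e > 0 \<Longrightarrow> \<exists>p. nrm (fdiff f (polyfun Om p)) < e"
proof -
  have "\<forall>f\<in>H. \<forall>e>0. \<exists>p. nrm (fdiff f (polyfun Om p)) < e"
    using setting_facts by (elim conjE) assumption
  then show "f \<in> H \<Longrightarrow> e > 0 \<Longrightarrow> \<exists>p. nrm (fdiff f (polyfun Om p)) < e"
    by blast
qed

lemma H_diff [intro]: "f \<in> H \<Longrightarrow> g \<in> H \<Longrightarrow> fdiff f g \<in> H"
proof -
  assume "f \<in> H" "g \<in> H"
  then have "fadd f (fscale (-1) g) \<in> H"
    by (intro H_add H_scale)
  then show "fdiff f g \<in> H"
    by simp
qed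

lemma ip_add_right: "f \<in> H \<Longrightarrow> g \<in> H \<Longrightarrow> h \<in> H \<Longrightarrow> ip f (fadd g h) = ip f g + ip f h"
  by (subst ip_commute) (auto simp: ip_add_left ip_commute[of f])

lemma ip_scale_right: "f \<in> H \<Longrightarrow> g \<in> H \<Longrightarrow> ip f (fscale c g) = cnj c * ip f g"
  by (subst ip_commute) (auto simp: ip_scale_left ip_commute[of f])

lemma ip_zero_left [simp]: "g \<in> H \<Longrightarrow> ip fzero g = 0"
  using ip_scale_left[of fzero g 0] by simp

lemma ip_zero_right [simp]: "g \<in> H \<Longrightarrow> ip g fzero = 0"
  using ip_scale_right[of g fzero 0] by simp

lemma ip_diff_left: "f \<in> H \<Longrightarrow> g \<in> H \<Longrightarrow> h \<in> H \<Longrightarrow> ip (fdiff f g) h = ip f h - ip g h"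
proof -
  assume "f \<in> H" "g \<in> H" "h \<in> H"
  then have "ip (fadd f (fscale (-1) g)) h = ip f h + ip (fscale (-1) g) h"
    by (intro ip_add_left H_scale)
  then show "ip (fdiff f g) h = ip f h - ip g h"
    using ip_scale_left[OF \<open>g \<in> H\<close> \<open>h \<in> H\<close>, of "-1"] by simp
qed

lemma ip_diff_right: "f \<in> H \<Longrightarrow> g \<in> H \<Longrightarrow> h \<in> H \<Longrightarrow> ip f (fdiff g h) = ip f g - ip f h"
  by (subst ip_commute) (auto simp: ip_diff_left ip_commute[of f])

lemma sum_in_H:
  assumes "finite I" "\<And>i. i \<in> I \<Longrightarrow> F i \<in> H"
  shows "(\<lambda>z. \<Sum>i\<in>I. c i * F i z) \<in> H"
  using assms
proof (induction I rule: finite_induct)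
  case (insert i I)
  then have "fadd (fscale (c i) (F i)) (\<lambda>z. \<Sum>i\<in>I. c i * F i z) \<in> H"
    by (intro H_add H_scale) auto
  then show ?case
    using insert.hyps by simp
qed simp

lemma ip_sum_left:
  assumes "finite I" "\<And>i. i \<in> I \<Longrightarrow> F i \<in> H" "g \<in> H"
  shows "ip (\<lambda>z. \<Sum>i\<in>I. c i * F i z) g = (\<Sum>i\<in>I. c i * ip (F i) g)"
  using assms
proof (induction I rule: finite_induct)
  case (insert i I)
  then have "ip (\<lambda>z. \<Sum>i\<in>insert i I. c i * F i z) g =
      ip (fscale (c i) (F i)) g + ip (\<lambda>z. \<Sum>i\<in>I. c i * F i z) g"
    using ip_add_left[of "fscale (c i) (F i)" "\<lambda>z. \<Sum>i\<in>I. c i * F i z" g] sum_in_H[of I F c] by auto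
  then show ?case
    using insert by (simp add: ip_scale_left)
qed simp

lemma ip_sum_right:
  assumes "finite I" "\<And>i. i \<in> I \<Longrightarrow> F i \<in> H" "g \<in> H"
  shows "ip g (\<lambda>z. \<Sum>i\<in>I. c i * F i z) = (\<Sum>i\<in>I. cnj (c i) * ip g (F i))"
  using assms sum_in_H[OF assms(1,2)] ip_commute[of g] ip_commute[of _ g]
  by (simp add: ip_sum_left[OF assms])

lemma hnorm_nonneg [simp]: "f \<in> H \<Longrightarrow> nrm f \<ge> 0"
  using ip_self_real_nonneg[of f] by (simp add: hnorm_def)

lemma hnorm_eq_0_iff: "f \<in> H \<Longrightarrow> nrm f = 0 \<longleftrightarrow> f = fzero"
  using ip_self[of f] ip_self_eq_0D[of f] by (auto simp: hnorm_def)

lemma hnorm_zero [simp]: "nrm fzero = 0"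
  using hnorm_eq_0_iff[OF zero_in_H] by simp

lemma hnorm_scale: "f \<in> H \<Longrightarrow> nrm (fscale c f) = cmod c * nrm f"
proof -
  assume f: "f \<in> H"
  have "ip (fscale c f) (fscale c f) = c * cnj c * ip f f"
    using f ip_scale_left[OF f H_scale[OF f]] ip_scale_right[OF f f] by simp
  also have "\<dots> = of_real ((cmod c * nrm f) ^ 2)"
    using ip_self[OF f] by (simp add: complex_norm_square[symmetric] power_mult_distrib)
  finally have "ip (fscale c f) (fscale c f) = of_real ((cmod c * nrm f) ^ 2)" .
  then show ?thesis
    using f ip_self_real_nonneg[OF f] by (simp add: hnorm_def)
qed

lemma hnorm_diff_commute: "f \<in> H \<Longrightarrow> g \<in> H \<Longrightarrow> nrm (fdiff f g) = nrm (fdiff g f)"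
proof -
  assume "f \<in> H" "g \<in> H"
  then have "nrm (fdiff g f) = nrm (fdiff f g)"
    using hnorm_scale[OF H_diff, of f g "-1"] by simp
  then show ?thesis
    by simp
qed

lemma ip_add_self:
  "f \<in> H \<Longrightarrow> g \<in> H \<Longrightarrow> ip (fadd f g) (fadd f g) = ip f f + ip f g + ip g f + ip g g"
  by (simp add: ip_add_left ip_add_right H_add)

lemma ip_diff_self:
  "f \<in> H \<Longrightarrow> g \<in> H \<Longrightarrow> ip (fdiff f g) (fdiff f g) = ip f f - ip f g - ip g f + ip g g"
  by (simp add: ip_diff_left ip_diff_right H_diff)

text \<open>Removing the component of \<open>f\<close> along \<open>g\<close>; this gives both the Cauchy--Schwarz inequality
  and the orthogonality of nearest points.\<close>
lemma hnorm_remove_component: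
  assumes f: "f \<in> H" and g: "g \<in> H" and "g \<noteq> fzero"
  shows "nrm (fdiff f (fscale (ip f g / of_real (nrm g ^ 2)) g)) ^ 2 = nrm f ^ 2 - cmod (ip f g) ^ 2 / nrm g ^ 2"
proof -
  define \<gamma> where "\<gamma> = nrm g ^ 2"
  define a where "a = ip f g"
  define t where "t = a / of_real \<gamma>"
  have "\<gamma> > 0"
    using assms hnorm_eq_0_iff[OF g] hnorm_nonneg[OF g] unfolding \<gamma>_def by fastforce
  have a_sq: "cnj a * a = of_real (cmod a ^ 2)"
    by (metis complex_norm_square mult.commute of_real_power)
  have tg: "fscale t g \<in> H"
    using g ..
  have "ip (fdiff f (fscale t g)) (fdiff f (fscale t g)) =
      ip f f - ip f (fscale t g) - ip (fscale t g) f + ip (fscale t g) (fscale t g)"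
    by (rule ip_diff_self[OF f tg])
  also have "\<dots> = ip f f - cnj t * a - t * cnj a + t * cnj t * of_real \<gamma>"
    using ip_scale_right[OF f g] ip_scale_left[OF g f] ip_scale_left[OF g tg] ip_scale_right[OF g g]
      ip_commute[OF f g] ip_self[OF g]
    by (simp add: a_def \<gamma>_def)
  also have "\<dots> = of_real (nrm f ^ 2 - cmod a ^ 2 / \<gamma>)"
    using \<open>\<gamma> > 0\<close> ip_self[OF f] a_sq
    by (simp add: t_def field_simps power2_eq_square mult.commute)
  finally have "nrm (fdiff f (fscale t g)) ^ 2 = nrm f ^ 2 - cmod a ^ 2 / \<gamma>"
    using ip_self[OF H_diff[OF f tg]] of_real_eq_iff by metis
  then show ?thesis
    by (simp only: t_def a_def \<gamma>_def)
qed

lemma cauchy_schwarz: "f \<in> H \<Longrightarrow> g \<in> H \<Longrightarrow> cmod (ip f g) \<le> nrm f * nrm g"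
proof (cases "g = fzero")
  case False
  assume f: "f \<in> H" and g: "g \<in> H"
  have "nrm g \<noteq> 0"
    using False hnorm_eq_0_iff[OF g] by simp
  then have g_pos: "nrm g > 0"
    using hnorm_nonneg[OF g] by linarith
  have "cmod (ip f g) ^ 2 / nrm g ^ 2 \<le> nrm f ^ 2"
    using hnorm_remove_component[OF f g False] zero_le_power2[of "nrm (fdiff f (fscale (ip f g / of_real (nrm g ^ 2)) g))"]
    by linarith
  then have "cmod (ip f g) ^ 2 \<le> (nrm f * nrm g) ^ 2"
    using g_pos by (simp add: divide_le_eq power_mult_distrib)
  then show ?thesis
    using hnorm_nonneg[OF f] hnorm_nonneg[OF g] by (meson mult_nonneg_nonneg power2_le_imp_le)
qed simp

lemma hnorm_triangle: "f \<in> H \<Longrightarrow> g \<in> H \<Longrightarrow> nrm (fadd f g) \<le> nrm f + nrm g"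
proof -
  assume f: "f \<in> H" and g: "g \<in> H"
  have "of_real (nrm (fadd f g) ^ 2) = ip f f + ip g g + (ip f g + cnj (ip f g))"
    using ip_self[OF H_add[OF f g]] ip_add_self[OF f g] ip_commute[OF f g] by (simp add: algebra_simps)
  also have "\<dots> = of_real (nrm f ^ 2 + nrm g ^ 2 + 2 * Re (ip f g))"
    using ip_self[OF f] ip_self[OF g] by (simp add: complex_add_cnj)
  finally have "nrm (fadd f g) ^ 2 = nrm f ^ 2 + nrm g ^ 2 + 2 * Re (ip f g)"
    by (simp only: of_real_eq_iff)
  also have "\<dots> \<le> (nrm f + nrm g) ^ 2"
    unfolding power2_sum using cauchy_schwarz[OF f g] complex_Re_le_cmod[of "ip f g"] by linarith
  finally show ?thesis
    using f g by (meson add_nonneg_nonneg hnorm_nonneg power2_le_imp_le)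
qed

lemma hnorm_triangle_diff: "f \<in> H \<Longrightarrow> g \<in> H \<Longrightarrow> h \<in> H \<Longrightarrow> nrm (fdiff f h) \<le> nrm (fdiff f g) + nrm (fdiff g h)"
  using hnorm_triangle[of "fdiff f g" "fdiff g h"] by auto

lemma hnorm_minus: "f \<in> H \<Longrightarrow> nrm (\<lambda>z. - f z) = nrm f"
  using hnorm_scale[of f "-1"] by simp

lemma hnorm_diff_le: "f \<in> H \<Longrightarrow> g \<in> H \<Longrightarrow> nrm (fdiff f g) \<le> nrm f + nrm g"
  using hnorm_triangle[of f "\<lambda>z. - g z"] hnorm_minus[of g] by (simp add: H_scale[of g "-1", simplified])

lemma ip_diff_bound: "f \<in> H \<Longrightarrow> g \<in> H \<Longrightarrow> k \<in> H \<Longrightarrow> cmod (ip f k - ip g k) \<le> nrm (fdiff f g) * nrm k"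
  using cauchy_schwarz[of "fdiff f g" k] by (simp add: ip_diff_left H_diff)

lemma parallelogram_law:
  "f \<in> H \<Longrightarrow> g \<in> H \<Longrightarrow> nrm (fdiff f g) ^ 2 + nrm (fadd f g) ^ 2 = 2 * nrm f ^ 2 + 2 * nrm g ^ 2"
  using ip_self[of "fdiff f g"] ip_self[of "fadd f g"] ip_self[of f] ip_self[of g]
    ip_diff_self[of f g] ip_add_self[of f g]
  by (simp add: H_diff H_add complex_eq_iff)

definition closed_subspace :: "cfun set \<Rightarrow> bool" where
  "closed_subspace V \<longleftrightarrow> V \<subseteq> H \<and> fzero \<in> V \<and> (\<forall>f\<in>V. \<forall>g\<in>V. fadd f g \<in> V) \<and>
     (\<forall>f\<in>V. \<forall>c. fscale c f \<in> V) \<and> (\<forall>f\<in>H. (\<forall>e>0. \<exists>g\<in>V. nrm (fdiff f g) < e) \<longrightarrow> f \<in> V)"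

lemma closed_subspaceD:
  assumes "closed_subspace V"
  shows "V \<subseteq> H" "fzero \<in> V" "f \<in> V \<Longrightarrow> g \<in> V \<Longrightarrow> fadd f g \<in> V" "f \<in> V \<Longrightarrow> fscale c f \<in> V"
    "f \<in> H \<Longrightarrow> (\<And>e. e > 0 \<Longrightarrow> \<exists>g\<in>V. nrm (fdiff f g) < e) \<Longrightarrow> f \<in> V"
  using assms unfolding closed_subspace_def by blast+

lemma closed_subspace_diff: "closed_subspace V \<Longrightarrow> f \<in> V \<Longrightarrow> g \<in> V \<Longrightarrow> fdiff f g \<in> V"
proof -
  assume "closed_subspace V" "f \<in> V" "g \<in> V"
  then have "fadd f (fscale (-1) g) \<in> V"
    by (intro closed_subspaceD(3,4))
  then show "fdiff f g \<in> V"
    by simp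
qed

lemma hclosure_subset_H: "hclosure H ip A \<subseteq> H"
  by (auto simp: hclosure_def)

lemma subset_hclosure: "A \<subseteq> H \<Longrightarrow> A \<subseteq> hclosure H ip A"
  unfolding hclosure_def by force

lemma hclosure_subset_closed_subspace:
  assumes "closed_subspace V" "A \<subseteq> V"
  shows "hclosure H ip A \<subseteq> V"
proof
  fix f assume "f \<in> hclosure H ip A"
  then show "f \<in> V"
    using assms(2) unfolding hclosure_def by (intro closed_subspaceD(5)[OF assms(1)]) blast+
qed

lemma closed_subspace_hclosure:
  assumes AH: "A \<subseteq> H" and "fzero \<in> A"
    and add: "\<And>f g. f \<in> A \<Longrightarrow> g \<in> A \<Longrightarrow> fadd f g \<in> A"
    and scale: "\<And>f c. f \<in> A \<Longrightarrow> fscale c f \<in> A"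
  shows "closed_subspace (hclosure H ip A)"
  unfolding closed_subspace_def
proof (intro conjI ballI allI impI)
  show "fzero \<in> hclosure H ip A"
    using subset_hclosure[OF AH] \<open>fzero \<in> A\<close> by blast
next
  fix f g assume "f \<in> hclosure H ip A" "g \<in> hclosure H ip A"
  then have fg: "f \<in> H" "g \<in> H" "\<And>e. e > 0 \<Longrightarrow> \<exists>a\<in>A. nrm (fdiff f a) < e"
    "\<And>e. e > 0 \<Longrightarrow> \<exists>b\<in>A. nrm (fdiff g b) < e"
    by (auto simp: hclosure_def)
  show "fadd f g \<in> hclosure H ip A"
    unfolding hclosure_def
  proof (intro CollectI conjI allI impI)
    fix e :: real assume "e > 0"
    then obtain a b where ab: "a \<in> A" "b \<in> A" "nrm (fdiff f a) < e / 2" "nrm (fdiff g b) < e / 2"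
      using fg(3,4)[of "e / 2"] by auto
    then have "a \<in> H" "b \<in> H"
      using AH by auto
    moreover have "fdiff (fadd f g) (fadd a b) = fadd (fdiff f a) (fdiff g b)"
      by (rule ext) simp
    ultimately have "nrm (fdiff (fadd f g) (fadd a b)) \<le> nrm (fdiff f a) + nrm (fdiff g b)"
      using hnorm_triangle[OF H_diff[OF fg(1)] H_diff[OF fg(2)]] by simp
    then show "\<exists>c\<in>A. nrm (fdiff (fadd f g) c) < e"
      using ab add by (intro bexI[of _ "fadd a b"]) auto
  qed (use fg in auto)
next
  fix f c assume f: "f \<in> hclosure H ip A"
  show "fscale c f \<in> hclosure H ip A"
    unfolding hclosure_def
  proof (intro CollectI conjI allI impI)
    fix e :: real assume "e > 0"
    have c1: "cmod c + 1 > 0"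
      by (simp add: add_nonneg_pos)
    then have "e / (cmod c + 1) > 0"
      using \<open>e > 0\<close> by simp
    then obtain a where a: "a \<in> A" "nrm (fdiff f a) < e / (cmod c + 1)"
      using f by (auto simp: hclosure_def)
    have fa: "fdiff f a \<in> H"
      using f a AH by (auto simp: hclosure_def)
    have "fdiff (fscale c f) (fscale c a) = fscale c (fdiff f a)"
      by (rule ext) (simp add: right_diff_distrib)
    then have "nrm (fdiff (fscale c f) (fscale c a)) = cmod c * nrm (fdiff f a)"
      using hnorm_scale[OF fa] by simp
    also have "\<dots> \<le> (cmod c + 1) * nrm (fdiff f a)"
      using fa by (intro mult_right_mono) auto
    also have "\<dots> < e"
      using a(2) pos_less_divide_eq[OF c1] by (simp add: mult.commute)
    finally show "\<exists>b\<in>A. nrm (fdiff (fscale c f) b) < e"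
      using a scale by (intro bexI[of _ "fscale c a"])
  qed (use f in \<open>auto simp: hclosure_def\<close>)
next
  fix f assume f: "f \<in> H" and approx: "\<forall>e>0. \<exists>g\<in>hclosure H ip A. nrm (fdiff f g) < e"
  show "f \<in> hclosure H ip A"
    unfolding hclosure_def
  proof (intro CollectI conjI allI impI f)
    fix e :: real assume "e > 0"
    then obtain g where g: "g \<in> hclosure H ip A" "nrm (fdiff f g) < e / 2"
      using approx by (meson half_gt_zero)
    moreover have "\<forall>e>0. \<exists>a\<in>A. nrm (fdiff g a) < e"
      using g(1) by (simp add: hclosure_def)
    ultimately obtain a where a: "a \<in> A" "nrm (fdiff g a) < e / 2"
      using \<open>e > 0\<close> by (meson half_gt_zero)
    have "g \<in> H" "a \<in> H"
      using g(1) a(1) AH by (auto simp: hclosure_def)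
    then have "nrm (fdiff f a) \<le> nrm (fdiff f g) + nrm (fdiff g a)"
      using hnorm_triangle_diff[OF f] by blast
    then show "\<exists>a\<in>A. nrm (fdiff f a) < e"
      using a g by (intro bexI[of _ a]) auto
  qed
qed (use AH in \<open>auto simp: hclosure_def\<close>)

text \<open>Along a minimizing sequence for the distance to a subspace, the parallelogram law forces the
  Cauchy property.\<close>
lemma minimizing_sequence_dist:
  assumes V: "closed_subspace V" and x: "x \<in> H" and mV: "\<And>n. m n \<in> V"
    and lower: "\<And>v. v \<in> V \<Longrightarrow> d \<le> nrm (fdiff x v) ^ 2"
    and upper: "\<And>n. nrm (fdiff x (m n)) ^ 2 \<le> d + inverse (real (Suc n))"
  shows "nrm (fdiff (m j) (m k)) ^ 2 \<le> 2 * inverse (real (Suc j)) + 2 * inverse (real (Suc k))"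
proof -
  have mH: "m n \<in> H" for n
    using mV closed_subspaceD(1)[OF V] by blast
  define mid where "mid = fscale (1 / 2) (fadd (m j) (m k))"
  have "mid \<in> V"
    unfolding mid_def using mV by (intro closed_subspaceD(3,4)[OF V])
  then have midH: "mid \<in> H"
    using closed_subspaceD(1)[OF V] by blast
  have "fdiff (fdiff x (m j)) (fdiff x (m k)) = fdiff (m k) (m j)"
    by (rule ext) simp
  moreover have "fadd (fdiff x (m j)) (fdiff x (m k)) = fscale 2 (fdiff x mid)"
    by (rule ext) (simp add: mid_def algebra_simps)
  ultimately have "nrm (fdiff (m k) (m j)) ^ 2 + 4 * nrm (fdiff x mid) ^ 2 =
      2 * nrm (fdiff x (m j)) ^ 2 + 2 * nrm (fdiff x (m k)) ^ 2"
    using parallelogram_law[OF H_diff[OF x mH] H_diff[OF x mH], of j k]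
      hnorm_scale[OF H_diff[OF x midH], of 2]
    by (simp add: power_mult_distrib)
  then show ?thesis
    unfolding hnorm_diff_commute[OF mH mH, of j k]
    using lower[OF \<open>mid \<in> V\<close>] upper[of j] upper[of k] by linarith
qed

lemma nearest_point_exists:
  assumes V: "closed_subspace V" and x: "x \<in> H"
  obtains v where "v \<in> V" "\<And>w. w \<in> V \<Longrightarrow> nrm (fdiff x v) \<le> nrm (fdiff x w)"
proof -
  have VH: "V \<subseteq> H"
    using closed_subspaceD(1)[OF V] .
  define D where "D = (\<lambda>v. nrm (fdiff x v) ^ 2) ` V"
  define d where "d = Inf D"
  have "D \<noteq> {}"
    using closed_subspaceD(2)[OF V] by (auto simp: D_def)
  have "bdd_below D"
    by (rule bdd_belowI[of _ 0]) (auto simp: D_def)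
  have lower: "d \<le> nrm (fdiff x v) ^ 2" if "v \<in> V" for v
    unfolding d_def using \<open>bdd_below D\<close> that by (intro cInf_lower) (auto simp: D_def)
  have approx: "\<exists>v. v \<in> V \<and> nrm (fdiff x v) ^ 2 < d + inverse (real (Suc n))" for n
  proof -
    have "Inf D < d + inverse (real (Suc n))"
      by (simp add: d_def)
    then show ?thesis
      using cInf_less_iff[OF \<open>D \<noteq> {}\<close> \<open>bdd_below D\<close>] by (auto simp: D_def)
  qed
  define m where "m n = (SOME v. v \<in> V \<and> nrm (fdiff x v) ^ 2 < d + inverse (real (Suc n)))" for n
  have "m n \<in> V \<and> nrm (fdiff x (m n)) ^ 2 < d + inverse (real (Suc n))" for n
    unfolding m_def by (rule someI_ex[OF approx])
  then have mV: "\<And>n. m n \<in> V" and upper: "\<And>n. nrm (fdiff x (m n)) ^ 2 < d + inverse (real (Suc n))"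
    by simp_all
  have mH: "m n \<in> H" for n
    using mV VH by blast
  have "\<forall>e>0. \<exists>N. \<forall>j\<ge>N. \<forall>k\<ge>N. nrm (fdiff (m j) (m k)) < e"
  proof (intro allI impI)
    fix e :: real assume "e > 0"
    then obtain N where N: "inverse (real (Suc N)) < e ^ 2 / 4"
      using reals_Archimedean[of "e ^ 2 / 4"] by auto
    show "\<exists>N. \<forall>j\<ge>N. \<forall>k\<ge>N. nrm (fdiff (m j) (m k)) < e"
    proof (intro exI allI impI)
      fix j k assume "N \<le> j" "N \<le> k"
      then have "inverse (real (Suc j)) \<le> inverse (real (Suc N))"
        "inverse (real (Suc k)) \<le> inverse (real (Suc N))"
        by (simp_all add: le_imp_inverse_le)
      then have "nrm (fdiff (m j) (m k)) ^ 2 < e ^ 2"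
        using minimizing_sequence_dist[OF V x mV lower less_imp_le[OF upper], where j = j and k = k] N
        by linarith
      then show "nrm (fdiff (m j) (m k)) < e"
        using \<open>e > 0\<close> by (meson less_imp_le power_less_imp_less_base)
    qed
  qed
  then obtain v where vH: "v \<in> H" and lim: "(\<lambda>n. nrm (fdiff (m n) v)) \<longlonglongrightarrow> 0"
    using H_complete[of m, OF mH] by blast
  have v_le: "nrm (fdiff x v) \<le> sqrt d"
  proof (rule LIMSEQ_le[OF LIMSEQ_const_iff[THEN iffD2, OF refl]])
    have "(\<lambda>n. sqrt (d + inverse (real (Suc n))) + nrm (fdiff (m n) v)) \<longlonglongrightarrow> sqrt d + 0"
      by (intro tendsto_add tendsto_real_sqrt LIMSEQ_inverse_real_of_nat_add lim)
    then show "(\<lambda>n. sqrt (d + inverse (real (Suc n))) + nrm (fdiff (m n) v)) \<longlonglongrightarrow> sqrt d"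
      by simp
    have "nrm (fdiff x v) \<le> sqrt (d + inverse (real (Suc n))) + nrm (fdiff (m n) v)" for n
      using hnorm_triangle_diff[OF x mH vH, of n] real_le_rsqrt[OF less_imp_le[OF upper[of n]]] by linarith
    then show "\<exists>N. \<forall>n\<ge>N. nrm (fdiff x v) \<le> sqrt (d + inverse (real (Suc n))) + nrm (fdiff (m n) v)"
      by blast
  qed
  have "v \<in> V"
  proof (rule closed_subspaceD(5)[OF V vH])
    fix e :: real assume "e > 0"
    then obtain N where "\<forall>n\<ge>N. nrm (fdiff (m n) v) < e"
      using order_tendstoD(2)[OF lim \<open>0 < e\<close>] unfolding eventually_sequentially by blast
    then have "nrm (fdiff v (m N)) < e"
      using hnorm_diff_commute[OF mH[of N] vH] by auto
    then show "\<exists>g\<in>V. nrm (fdiff v g) < e"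
      using mV by blast
  qed
  moreover have "nrm (fdiff x v) \<le> nrm (fdiff x w)" if "w \<in> V" for w
  proof -
    have "w \<in> H"
      using VH that by blast
    then have "sqrt d \<le> nrm (fdiff x w)"
      using real_sqrt_le_mono[OF lower[OF that]] hnorm_nonneg[OF H_diff[OF x]] by simp
    then show ?thesis
      using v_le by linarith
  qed
  ultimately show ?thesis
    by (rule that)
qed

lemma nearest_point_orthogonal:
  assumes V: "closed_subspace V" and x: "x \<in> H" and v: "v \<in> V" and w: "w \<in> V"
    and nearest: "\<And>u. u \<in> V \<Longrightarrow> nrm (fdiff x v) \<le> nrm (fdiff x u)"
  shows "ip (fdiff x v) w = 0"
proof (rule ccontr)
  assume ne: "ip (fdiff x v) w \<noteq> 0"
  have vH: "v \<in> H" and wH: "w \<in> H"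
    using v w closed_subspaceD(1)[OF V] by auto
  have xv: "fdiff x v \<in> H"
    using x vH by blast
  have "w \<noteq> fzero"
    using ne xv by auto
  then have "nrm w > 0"
    using hnorm_eq_0_iff[OF wH] hnorm_nonneg[OF wH] by linarith
  define t where "t = ip (fdiff x v) w / of_real (nrm w ^ 2)"
  have "fadd v (fscale t w) \<in> V"
    using v w by (intro closed_subspaceD(3,4)[OF V])
  then have "nrm (fdiff x v) \<le> nrm (fdiff x (fadd v (fscale t w)))"
    by (rule nearest)
  moreover have "fdiff x (fadd v (fscale t w)) = fdiff (fdiff x v) (fscale t w)"
    by (rule ext) simp
  ultimately have "nrm (fdiff x v) \<le> nrm (fdiff (fdiff x v) (fscale t w))"
    by (simp only:)
  then have "nrm (fdiff x v) ^ 2 \<le> nrm (fdiff (fdiff x v) (fscale t w)) ^ 2"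
    using hnorm_nonneg[OF xv] by (rule power_mono)
  moreover have "cmod (ip (fdiff x v) w) ^ 2 / nrm w ^ 2 > 0"
    using ne \<open>nrm w > 0\<close> by simp
  ultimately show False
    using hnorm_remove_component[OF xv wH \<open>w \<noteq> fzero\<close>] unfolding t_def by linarith
qed

lemma proj_eqI:
  assumes V: "closed_subspace V" and x: "x \<in> H" and v: "v \<in> V"
    and orth: "\<And>w. w \<in> V \<Longrightarrow> ip (fdiff x v) w = 0"
  shows "proj ip V x = v"
  unfolding proj_def
proof (rule the_equality)
  fix u assume u: "u \<in> V \<and> (\<forall>w\<in>V. ip (fdiff x u) w = 0)"
  have uH: "u \<in> H" and vH: "v \<in> H"
    using u v closed_subspaceD(1)[OF V] by auto
  have vu: "fdiff v u \<in> V"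
    using closed_subspace_diff[OF V v] u by blast
  then have "ip (fdiff x u) (fdiff v u) - ip (fdiff x v) (fdiff v u) = 0"
    using u orth by simp
  moreover have "fdiff (fdiff x u) (fdiff x v) = fdiff v u"
    by (rule ext) simp
  ultimately have "ip (fdiff v u) (fdiff v u) = 0"
    using ip_diff_left[OF H_diff[OF x uH] H_diff[OF x vH], of "fdiff v u"] H_diff[OF vH uH] by simp
  then have "fdiff v u = fzero"
    using ip_self_eq_0D H_diff[OF vH uH] by blast
  then show "u = v"
    by (metis (no_types, lifting) ext eq_iff_diff_eq_0)
qed (use v orth in blast)

lemma
  assumes V: "closed_subspace V" and x: "x \<in> H"
  shows proj_in: "proj ip V x \<in> V"
    and proj_orthogonal: "w \<in> V \<Longrightarrow> ip (fdiff x (proj ip V x)) w = 0"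
proof -
  obtain v where v: "v \<in> V" "\<And>w. w \<in> V \<Longrightarrow> nrm (fdiff x v) \<le> nrm (fdiff x w)"
    using nearest_point_exists[OF V x] by blast
  then have orth: "\<And>w. w \<in> V \<Longrightarrow> ip (fdiff x v) w = 0"
    using nearest_point_orthogonal[OF V x] by blast
  then have "proj ip V x = v"
    using proj_eqI[OF V x v(1)] by blast
  then show "proj ip V x \<in> V" "w \<in> V \<Longrightarrow> ip (fdiff x (proj ip V x)) w = 0"
    using v(1) orth by simp_all
qed

lemma polyfun_notin_kernel_closure:
  fixes L :: "complex poly \<Rightarrow> complex"
  assumes add: "\<And>p q. L (p + q) = L p + L q"
    and bounded: "\<And>p. cmod (L p) \<le> C * nrm (polyfun Om p)" and "L p1 = 1"
  shows "polyfun Om p1 \<notin> hclosure H ip {polyfun Om q | q. L q = 0}"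
proof
  assume "polyfun Om p1 \<in> hclosure H ip {polyfun Om q | q. L q = 0}"
  moreover have "1 / (max C 0 + 1) > 0"
    by (simp add: add_nonneg_pos)
  ultimately obtain q where q: "L q = 0" "nrm (fdiff (polyfun Om p1) (polyfun Om q)) < 1 / (max C 0 + 1)"
    unfolding hclosure_def by blast
  have "L (p1 - q) = 1"
    using add[of "p1 - q" q] q(1) \<open>L p1 = 1\<close> by simp
  then have "1 \<le> C * nrm (polyfun Om (p1 - q))"
    using bounded[of "p1 - q"] by simp
  also have "\<dots> \<le> (max C 0 + 1) * nrm (polyfun Om (p1 - q))"
    by (intro mult_right_mono) auto
  also have "\<dots> < 1"
    using q(2) by (simp add: polyfun_diff field_simps add_nonneg_pos)
  finally show False
    by simp
qed

lemma riesz_polyfun: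
  fixes L :: "complex poly \<Rightarrow> complex"
  assumes add: "\<And>p q. L (p + q) = L p + L q" and scale: "\<And>c p. L (Polynomial.smult c p) = c * L p"
    and bounded: "\<And>p. cmod (L p) \<le> C * nrm (polyfun Om p)"
  shows "\<exists>k\<in>H. \<forall>p. ip (polyfun Om p) k = L p"
proof (cases "\<forall>p. L p = 0")
  case False
  then obtain p0 where "L p0 \<noteq> 0"
    by blast
  define p1 where "p1 = Polynomial.smult (1 / L p0) p0"
  have L_p1: "L p1 = 1"
    using \<open>L p0 \<noteq> 0\<close> by (simp add: p1_def scale)
  have diff: "L (p - q) = L p - L q" for p q
    using add[of "p - q" q] by simp
  define A where "A = {polyfun Om q | q. L q = 0}"
  define M where "M = hclosure H ip A"
  have AH: "A \<subseteq> H"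
    by (auto simp: A_def)
  have M: "closed_subspace M"
    unfolding M_def
  proof (rule closed_subspace_hclosure[OF AH])
    show "fzero \<in> A"
      using scale[of 0 0] unfolding A_def by (intro CollectI exI[of _ 0]) simp
    show "fadd f g \<in> A" if "f \<in> A" "g \<in> A" for f g
      using that add unfolding A_def by (auto simp: polyfun_add[symmetric])
    show "fscale c f \<in> A" if "f \<in> A" for f c
      using that scale unfolding A_def by (auto simp: polyfun_smult[symmetric])
  qed
  define u where "u = fdiff (polyfun Om p1) (proj ip M (polyfun Om p1))"
  have proj_M: "proj ip M (polyfun Om p1) \<in> H"
    using proj_in[OF M polyfun_in_H] closed_subspaceD(1)[OF M] by blast
  then have uH: "u \<in> H"
    by (auto simp: u_def)
  have u_perp: "ip w u = 0" if "w \<in> M" for w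
    using proj_orthogonal[OF M polyfun_in_H that] ip_commute[OF uH, of w] that closed_subspaceD(1)[OF M]
    by (auto simp: u_def)
  have kernel_M: "polyfun Om q \<in> M" if "L q = 0" for q
    using subset_hclosure[OF AH] that by (auto simp: M_def A_def)
  have L_u: "ip (polyfun Om p) u = L p * ip (polyfun Om p1) u" for p
  proof -
    define q where "q = p - Polynomial.smult (L p) p1"
    have "L q = 0"
      by (simp add: q_def diff scale L_p1)
    then have "ip (polyfun Om q) u = 0"
      by (intro u_perp kernel_M)
    moreover have "polyfun Om q = fdiff (polyfun Om p) (fscale (L p) (polyfun Om p1))"
      by (simp add: q_def polyfun_diff polyfun_smult)
    ultimately show ?thesis
      using ip_diff_left[OF polyfun_in_H H_scale[OF polyfun_in_H] uH] ip_scale_left[OF polyfun_in_H uH]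
      by simp
  qed
  have "polyfun Om p1 = fadd u (proj ip M (polyfun Om p1))"
    by (simp add: u_def)
  then have p1_u: "ip (polyfun Om p1) u = ip u u"
    using ip_add_left[OF uH proj_M uH] u_perp[OF proj_in[OF M polyfun_in_H]] by simp
  have "u \<noteq> fzero"
  proof
    assume "u = fzero"
    then have "proj ip M (polyfun Om p1) = polyfun Om p1"
      by (simp add: u_def fun_eq_iff)
    then have "polyfun Om p1 \<in> M"
      using proj_in[OF M polyfun_in_H[of p1]] by (simp only:)
    then show False
      using polyfun_notin_kernel_closure[of L C p1, OF add bounded L_p1] by (simp add: M_def A_def)
  qed
  then have "nrm u > 0"
    using hnorm_eq_0_iff[OF uH] hnorm_nonneg[OF uH] by linarith
  define k where "k = fscale (of_real (1 / nrm u ^ 2)) u"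
  have "ip (polyfun Om p) k = L p" for p
  proof -
    have "ip (polyfun Om p) k = cnj (of_real (1 / nrm u ^ 2)) * ip (polyfun Om p) u"
      unfolding k_def by (rule ip_scale_right[OF polyfun_in_H uH])
    then show ?thesis
      using L_u[of p] p1_u ip_self[OF uH] \<open>nrm u > 0\<close> by simp
  qed
  moreover have "k \<in> H"
    unfolding k_def using uH by (rule H_scale)
  ultimately show ?thesis
    by blast
next
  case True
  then show ?thesis
    by (intro bexI[of _ fzero]) auto
qed

lemma
  assumes "reproducible_order Om ip \<beta> m"
  shows kern_in_H: "kern Om H ip \<beta> m \<in> H"
    and ip_polyfun_kern: "ip (polyfun Om p) (kern Om H ip \<beta> m) = poly ((pderiv ^^ m) p) \<beta>"
proof -
  obtain C where C: "\<And>p. cmod (poly ((pderiv ^^ m) p) \<beta>) \<le> C * nrm (polyfun Om p)"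
    using assms unfolding reproducible_order_def by blast
  have "\<exists>k\<in>H. \<forall>p. ip (polyfun Om p) k = poly ((pderiv ^^ m) p) \<beta>"
    by (rule riesz_polyfun[where C = C]) (simp_all add: higher_pderiv_add higher_pderiv_smult C)
  then have "\<exists>k. k \<in> H \<and> (\<forall>p. ip (polyfun Om p) k = poly ((pderiv ^^ m) p) \<beta>)"
    by blast
  from someI_ex[OF this] show "kern Om H ip \<beta> m \<in> H"
    "ip (polyfun Om p) (kern Om H ip \<beta> m) = poly ((pderiv ^^ m) p) \<beta>"
    unfolding kern_def by blast+
qed

lemma deriv_at_polyfun:
  "reproducible_order Om ip \<beta> m \<Longrightarrow> deriv_at Om H ip (polyfun Om p) \<beta> m = poly ((pderiv ^^ m) p) \<beta>"
  by (simp add: deriv_at_def ip_polyfun_kern)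

lemma deriv_at_diff_bound:
  "reproducible_order Om ip \<beta> m \<Longrightarrow> f \<in> H \<Longrightarrow> g \<in> H \<Longrightarrow>
    cmod (deriv_at Om H ip f \<beta> m - deriv_at Om H ip g \<beta> m) \<le> nrm (fdiff f g) * nrm (kern Om H ip \<beta> m)"
  unfolding deriv_at_def by (rule ip_diff_bound) (simp_all add: kern_in_H)

lemma poly_mult_pCons:
  "f \<in> H \<Longrightarrow> poly_mult (pCons a q) f = fadd (fscale a f) (shift Om (poly_mult q f))"
  by (auto simp: poly_mult_def shift_def H_zero_outside algebra_simps)

lemma poly_mult_in_H: "f \<in> H \<Longrightarrow> poly_mult q f \<in> H"
proof (induction q)
  case (pCons a q)
  then show ?case
    unfolding poly_mult_pCons[OF pCons.prems] by (intro H_add H_scale shift_in_H)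
qed (simp add: poly_mult_def)

lemma poly_mult_bounded: "\<exists>C\<ge>0. \<forall>f\<in>H. nrm (poly_mult q f) \<le> C * nrm f"
proof (induction q)
  case (pCons a q)
  obtain C where C: "C \<ge> 0" "\<forall>f\<in>H. nrm (poly_mult q f) \<le> C * nrm f"
    using pCons.IH by blast
  obtain S where S: "\<forall>f\<in>H. nrm (shift Om f) \<le> S * nrm f"
    using shift_bounded by blast
  have "nrm (poly_mult (pCons a q) f) \<le> (cmod a + max S 0 * C) * nrm f" if f: "f \<in> H" for f
  proof -
    have qf: "poly_mult q f \<in> H"
      using f by (rule poly_mult_in_H)
    have "nrm (poly_mult (pCons a q) f) \<le> nrm (fscale a f) + nrm (shift Om (poly_mult q f))"
      unfolding poly_mult_pCons[OF f] by (rule hnorm_triangle[OF H_scale[OF f] shift_in_H[OF qf]])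
    also have "nrm (shift Om (poly_mult q f)) \<le> max S 0 * nrm (poly_mult q f)"
      using S qf hnorm_nonneg[OF qf] by (meson max.cobounded1 mult_right_mono order_trans)
    also have "\<dots> \<le> max S 0 * (C * nrm f)"
      using C f by (intro mult_left_mono) auto
    finally show ?thesis
      using hnorm_scale[OF f] by (simp add: algebra_simps)
  qed
  then show ?case
    using C(1) by (intro exI[of _ "cmod a + max S 0 * C"]) auto
qed (auto simp: poly_mult_def hnorm_def)

lemma invsub_polyfun_eq: "invsub H ip (polyfun Om p) = hclosure H ip (polyfun_multiples Om p)"
proof -
  have "(\<lambda>z. \<Sum>k<n. c k * z ^ k * polyfun Om p z) = polyfun Om ((\<Sum>k<n. monom (c k) k) * p)" for n c
    by (auto simp: polyfun_def poly_sum poly_monom sum_distrib_right)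
  moreover have "polyfun Om (r * p) = (\<lambda>z. \<Sum>k<Suc (degree r). coeff r k * z ^ k * polyfun Om p z)" for r
    by (auto simp: polyfun_def poly_altdef[of r] sum_distrib_right lessThan_Suc_atMost)
  ultimately have "{(\<lambda>z. \<Sum>k<n. c k * z ^ k * polyfun Om p z) | n c. True} = polyfun_multiples Om p"
    unfolding polyfun_multiples_def by blast
  then show ?thesis
    by (simp add: invsub_def)
qed

lemma closed_subspace_invsub: "closed_subspace (invsub H ip (polyfun Om p))"
  unfolding invsub_polyfun_eq
proof (rule closed_subspace_hclosure)
  show "fzero \<in> polyfun_multiples Om p"
    unfolding polyfun_multiples_def by (intro CollectI exI[of _ 0]) simp
  show "fadd f g \<in> polyfun_multiples Om p"
    if fg: "f \<in> polyfun_multiples Om p" "g \<in> polyfun_multiples Om p" for f g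
  proof -
    obtain r1 r2 where "f = polyfun Om (r1 * p)" "g = polyfun Om (r2 * p)"
      using fg unfolding polyfun_multiples_def by blast
    then have "fadd f g = polyfun Om ((r1 + r2) * p)"
      by (simp add: polyfun_add distrib_right)
    then show ?thesis
      unfolding polyfun_multiples_def by blast
  qed
  show "fscale c f \<in> polyfun_multiples Om p" if f: "f \<in> polyfun_multiples Om p" for f c
  proof -
    obtain r where "f = polyfun Om (r * p)"
      using f unfolding polyfun_multiples_def by blast
    then have "fscale c f = polyfun Om (Polynomial.smult c r * p)"
      by (simp add: polyfun_smult)
    then show ?thesis
      unfolding polyfun_multiples_def by blast
  qed
  show "polyfun_multiples Om p \<subseteq> H"
    unfolding polyfun_multiples_def by blast
qed

lemma invsub_subset_H: "invsub H ip (polyfun Om p) \<subseteq> H"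
  using closed_subspaceD(1)[OF closed_subspace_invsub] .

lemma polyfun_mult_in_invsub: "polyfun Om (r * p) \<in> invsub H ip (polyfun Om p)"
proof -
  have "polyfun_multiples Om p \<subseteq> H"
    unfolding polyfun_multiples_def by blast
  moreover have "polyfun Om (r * p) \<in> polyfun_multiples Om p"
    unfolding polyfun_multiples_def by blast
  ultimately show ?thesis
    unfolding invsub_polyfun_eq using subset_hclosure by blast
qed

lemma poly_mult_in_invsub:
  assumes f: "f \<in> invsub H ip (polyfun Om s)"
  shows "poly_mult q f \<in> invsub H ip (polyfun Om (q * s))"
proof -
  obtain C where C: "C \<ge> 0" "\<forall>f\<in>H. nrm (poly_mult q f) \<le> C * nrm f"
    using poly_mult_bounded by blast
  have fH: "f \<in> H"
    using f invsub_subset_H by blast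
  show ?thesis
    unfolding invsub_polyfun_eq hclosure_def
  proof (intro CollectI conjI allI impI)
    show "poly_mult q f \<in> H"
      using fH by (rule poly_mult_in_H)
    fix e :: real assume "e > 0"
    then have "e / (C + 1) > 0"
      using C by simp
    then obtain r where r: "nrm (fdiff f (polyfun Om (r * s))) < e / (C + 1)"
      using f unfolding invsub_polyfun_eq hclosure_def polyfun_multiples_def by blast
    have "nrm (fdiff (poly_mult q f) (polyfun Om (r * (q * s)))) = nrm (poly_mult q (fdiff f (polyfun Om (r * s))))"
      by (simp add: poly_mult_diff poly_mult_polyfun algebra_simps)
    also have "\<dots> \<le> C * nrm (fdiff f (polyfun Om (r * s)))"
      using C fH by blast
    also have "\<dots> \<le> C * (e / (C + 1))"
      using r C by (intro mult_left_mono) auto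
    also have "\<dots> < e"
      using \<open>e > 0\<close> C by (simp add: field_simps)
    finally show "\<exists>a\<in>polyfun_multiples Om (q * s). nrm (fdiff (poly_mult q f) a) < e"
      unfolding polyfun_multiples_def by blast
  qed
qed

lemma invsub_mult_subset: "invsub H ip (polyfun Om (q * s)) \<subseteq> invsub H ip (polyfun Om s)"
  unfolding invsub_polyfun_eq[of "q * s"]
  by (rule hclosure_subset_closed_subspace[OF closed_subspace_invsub])
    (auto simp: polyfun_multiples_def mult.assoc[symmetric] intro: polyfun_mult_in_invsub)

lemma invsub_mult_mono:
  assumes "polyfun Om s1 \<in> invsub H ip (polyfun Om s2)"
  shows "invsub H ip (polyfun Om (q * s1)) \<subseteq> invsub H ip (polyfun Om (q * s2))"
  unfolding invsub_polyfun_eq[of "q * s1"]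
proof (rule hclosure_subset_closed_subspace[OF closed_subspace_invsub], rule subsetI)
  fix f assume "f \<in> polyfun_multiples Om (q * s1)"
  then obtain r where "f = poly_mult (r * q) (polyfun Om s1)"
    by (auto simp: polyfun_multiples_def poly_mult_polyfun mult.assoc)
  then show "f \<in> invsub H ip (polyfun Om (q * s2))"
    using poly_mult_in_invsub[OF assms, of "r * q"] invsub_mult_subset[of r "q * s2"]
    by (auto simp: mult.assoc)
qed

lemma invsub_subset_if_mem:
  "polyfun Om s1 \<in> invsub H ip (polyfun Om s2) \<Longrightarrow> invsub H ip (polyfun Om s1) \<subseteq> invsub H ip (polyfun Om s2)"
  using invsub_mult_mono[of s1 s2 1] by simp

lemma invsub_one: "invsub H ip (polyfun Om 1) = H"
proof
  show "H \<subseteq> invsub H ip (polyfun Om 1)"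
    unfolding invsub_polyfun_eq hclosure_def polyfun_multiples_def using polyfun_dense by fastforce
qed (rule invsub_subset_H)

lemma reproducible_order_Suc_imp:
  assumes "reproducible_order Om ip \<beta> (Suc j)"
  shows "reproducible_order Om ip \<beta> j"
proof -
  obtain C1 where C1: "\<And>p. cmod (poly ((pderiv ^^ Suc j) p) \<beta>) \<le> C1 * nrm (polyfun Om p)"
    using assms unfolding reproducible_order_def by blast
  obtain C where C: "C \<ge> 0" "\<forall>f\<in>H. nrm (poly_mult [:-\<beta>, 1:] f) \<le> C * nrm f"
    using poly_mult_bounded by blast
  have "cmod (poly ((pderiv ^^ j) p) \<beta>) \<le> \<bar>C1\<bar> * C * nrm (polyfun Om p)" for p
  proof -
    have "cmod (poly ((pderiv ^^ j) p) \<beta>) \<le> real (Suc j) * cmod (poly ((pderiv ^^ j) p) \<beta>)"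
      by (simp add: mult_le_cancel_right1)
    also have "\<dots> = cmod (poly ((pderiv ^^ Suc j) ([:-\<beta>, 1:] * p)) \<beta>)"
      by (simp only: poly_higher_pderiv_linear_mult norm_mult norm_of_nat)
    also have "\<dots> \<le> \<bar>C1\<bar> * nrm (polyfun Om ([:-\<beta>, 1:] * p))"
      using C1[of "[:-\<beta>, 1:] * p"] abs_ge_self[of C1] by (meson hnorm_nonneg mult_right_mono order_trans polyfun_in_H)
    also have "\<dots> \<le> \<bar>C1\<bar> * (C * nrm (polyfun Om p))"
      using C(2) polyfun_in_H[of p] unfolding poly_mult_polyfun[symmetric]
      by (intro mult_left_mono) auto
    finally show ?thesis
      by (simp add: mult.assoc)
  qed
  then show ?thesis
    unfolding reproducible_order_def by blast
qed

lemma reproducible_order_le: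
  "reproducible_order Om ip \<beta> m \<Longrightarrow> j \<le> m \<Longrightarrow> reproducible_order Om ip \<beta> j"
proof (induction m)
  case (Suc m)
  then show ?case
    using reproducible_order_Suc_imp by (cases "j = Suc m") auto
qed simp

definition hdist :: "cfun \<Rightarrow> cfun \<Rightarrow> real" where
  "hdist f g = (if f \<in> H \<and> g \<in> H then nrm (fdiff f g) else 0)"

lemma Metric_space_hdist: "Metric_space H hdist"
proof
  fix f g
  show "0 \<le> hdist f g"
    using hnorm_nonneg[OF H_diff[of f g]] by (simp add: hdist_def)
  show "hdist f g = hdist g f"
    using hnorm_diff_commute[of f g] by (simp add: hdist_def)
next
  fix f g assume "f \<in> H" "g \<in> H"
  then have "nrm (fdiff f g) = 0 \<longleftrightarrow> f = g"
    using hnorm_eq_0_iff[OF H_diff] by (simp add: fun_eq_iff)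
  then show "hdist f g = 0 \<longleftrightarrow> f = g"
    using \<open>f \<in> H\<close> \<open>g \<in> H\<close> by (simp add: hdist_def)
next
  fix f g h assume "f \<in> H" "g \<in> H" "h \<in> H"
  then show "hdist f h \<le> hdist f g + hdist g h"
    using hnorm_triangle_diff by (simp add: hdist_def)
qed

lemma mcomplete_hdist: "Metric_space.mcomplete H hdist"
proof -
  interpret MS: Metric_space H hdist
    by (rule Metric_space_hdist)
  show ?thesis
    unfolding MS.mcomplete_def
  proof (intro allI impI)
    fix \<sigma> assume Cauchy: "MS.MCauchy \<sigma>"
    then have \<sigma>H: "\<And>n. \<sigma> n \<in> H"
      unfolding MS.MCauchy_def by auto
    then have "\<forall>e>0. \<exists>N. \<forall>m\<ge>N. \<forall>n\<ge>N. nrm (fdiff (\<sigma> m) (\<sigma> n)) < e"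
      using Cauchy unfolding MS.MCauchy_def hdist_def by simp
    then obtain f where f: "f \<in> H" "(\<lambda>n. nrm (fdiff (\<sigma> n) f)) \<longlonglongrightarrow> 0"
      using H_complete[of \<sigma>, OF \<sigma>H] by blast
    moreover have "(\<lambda>n. hdist (\<sigma> n) f) = (\<lambda>n. nrm (fdiff (\<sigma> n) f))"
      using \<sigma>H f(1) by (simp add: hdist_def)
    ultimately have "limitin MS.mtopology \<sigma> f sequentially"
      unfolding MS.limitin_metric_dist_null using \<sigma>H by simp
    then show "\<exists>f. limitin MS.mtopology \<sigma> f sequentially"
      by blast
  qed
qed

lemma closedin_bounded_on:
  assumes "S \<subseteq> Om"
  shows "closedin (Metric_space.mtopology H hdist) {f \<in> H. \<forall>w\<in>S. cmod (f w) \<le> c}"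
    (is "closedin _ ?E")
proof -
  interpret MS: Metric_space H hdist
    by (rule Metric_space_hdist)
  show ?thesis
    unfolding MS.closedin_metric
  proof (intro conjI allI impI)
    fix f assume f: "f \<in> H - ?E"
    then obtain w where w: "w \<in> S" "cmod (f w) > c"
      by force
    obtain C where C: "\<forall>g\<in>H. cmod (g w) \<le> C * nrm g"
      using point_eval_bounded w(1) assms by blast
    define \<epsilon> where "\<epsilon> = (cmod (f w) - c) / (\<bar>C\<bar> + 1)"
    have "\<epsilon> > 0"
      using w(2) by (simp add: \<epsilon>_def add_nonneg_pos)
    have "disjnt ?E (MS.mball f \<epsilon>)"
      unfolding disjnt_def
    proof (rule equals0I)
      fix g assume "g \<in> ?E \<inter> MS.mball f \<epsilon>"
      then have g: "g \<in> H" "hdist f g < \<epsilon>" "cmod (g w) \<le> c" and fH: "f \<in> H"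
        using w(1) by auto
      have "cmod (f w - g w) \<le> C * nrm (fdiff f g)"
        using C H_diff[OF fH g(1)] by auto
      also have "\<dots> \<le> \<bar>C\<bar> * nrm (fdiff f g)"
        using hnorm_nonneg[OF H_diff[OF fH g(1)]] by (simp add: mult_right_mono)
      also have "\<dots> \<le> \<bar>C\<bar> * \<epsilon>"
        using g fH by (intro mult_left_mono) (auto simp: hdist_def)
      also have "\<dots> < cmod (f w) - c"
        using \<open>\<epsilon> > 0\<close> by (simp add: \<epsilon>_def field_simps)
      finally show False
        using g(3) norm_triangle_sub[of "f w" "g w"] by linarith
    qed
    then show "\<exists>r>0. disjnt ?E (MS.mball f r)"
      using \<open>\<epsilon> > 0\<close> by blast
  qed blast
qed

text \<open>Uniform boundedness on a disc around \<open>0\<close>: by the Baire category theorem one of the closed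
  sets \<open>{f. |f| \<le> n on the disc}\<close> contains a ball, and translating and scaling that ball gives
  the bound.\<close>
lemma uniform_point_eval_bound:
  obtains r K where "r > 0" "cball 0 r \<subseteq> Om"
    "\<And>f w. f \<in> H \<Longrightarrow> w \<in> cball 0 r \<Longrightarrow> cmod (f w) \<le> K * nrm f"
proof -
  interpret MS: Metric_space H hdist
    by (rule Metric_space_hdist)
  obtain r where r: "r > 0" "cball 0 r \<subseteq> Om"
    using open_Om zero_in_Om open_contains_cball by blast
  define E where "E n = {f \<in> H. \<forall>w\<in>cball 0 r. cmod (f w) \<le> real n}" for n :: nat
  have "\<Union> (range E) = H"
  proof (intro equalityI subsetI)
    fix f assume f: "f \<in> H"
    have "compact (f ` cball 0 r)"
      using holomorphic_on_imp_continuous_on[OF H_holomorphic[OF f]] r(2)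
      by (intro compact_continuous_image) (auto intro: continuous_on_subset)
    then obtain B where "\<forall>y\<in>f ` cball 0 r. norm y \<le> B"
      using compact_imp_bounded bounded_iff by metis
    moreover obtain n :: nat where "B \<le> real n"
      using real_arch_simple by blast
    ultimately have "f \<in> E n"
      using f by (force simp: E_def)
    then show "f \<in> \<Union> (range E)"
      by blast
  qed (auto simp: E_def)
  have "\<exists>n. MS.mtopology interior_of (E n) \<noteq> {}"
  proof (rule ccontr)
    assume "\<not> ?thesis"
    then have "MS.mtopology interior_of \<Union> (range E) = {}"
      using closedin_bounded_on[OF r(2)]
      by (intro MS.metric_Baire_category_alt mcomplete_hdist) (auto simp: E_def)
    then show False
      using \<open>\<Union> (range E) = H\<close> MS.topspace_mtopology interior_of_topspace zero_in_H by (metis empty_iff)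
  qed
  then obtain n x where "x \<in> MS.mtopology interior_of (E n)"
    by blast
  then obtain \<epsilon> where x: "x \<in> H" and "\<epsilon> > 0" and ball: "MS.mball x \<epsilon> \<subseteq> E n"
    unfolding MS.in_interior_of_mball by blast
  have "cmod (g w) \<le> 4 * real n / \<epsilon> * nrm g" if g: "g \<in> H" and w: "w \<in> cball 0 r" for g w
  proof (cases "g = fzero")
    case False
    then have "nrm g > 0"
      using hnorm_eq_0_iff[OF g] hnorm_nonneg[OF g] by linarith
    define t where "t = \<epsilon> / (2 * nrm g)"
    have "t > 0"
      using \<open>\<epsilon> > 0\<close> \<open>nrm g > 0\<close> by (simp add: t_def)
    define h where "h = fadd x (fscale (of_real t) g)"
    have hH: "h \<in> H"
      unfolding h_def using x g by (intro H_add H_scale)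
    have "nrm (fdiff x h) = nrm (fscale (- of_real t) g)"
      by (simp add: h_def)
    also have "\<dots> = t * nrm g"
      using hnorm_scale[OF g, of "- of_real t"] \<open>t > 0\<close> by simp
    also have "\<dots> = \<epsilon> / 2"
      using \<open>nrm g > 0\<close> by (simp add: t_def)
    finally have "nrm (fdiff x h) = \<epsilon> / 2" .
    then have "h \<in> MS.mball x \<epsilon>" "x \<in> MS.mball x \<epsilon>"
      using x hH \<open>\<epsilon> > 0\<close> by (auto simp: hdist_def)
    then have "cmod (h w) \<le> real n" "cmod (x w) \<le> real n"
      using ball w by (auto simp: E_def)
    moreover have "t * cmod (g w) = cmod (h w - x w)"
      using \<open>t > 0\<close> by (simp add: h_def norm_mult)
    ultimately have "t * cmod (g w) \<le> 2 * real n"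
      using norm_triangle_ineq4[of "h w" "x w"] by linarith
    then show ?thesis
      using \<open>t > 0\<close> \<open>nrm g > 0\<close> \<open>\<epsilon> > 0\<close> by (simp add: t_def field_simps)
  qed simp
  with r show ?thesis
    by (rule that)
qed

theorem zero_reproducible: "reproducible_order Om ip 0 m"
proof -
  obtain r K where r: "r > 0" "cball 0 r \<subseteq> Om"
    and K: "\<And>f w. f \<in> H \<Longrightarrow> w \<in> cball 0 r \<Longrightarrow> cmod (f w) \<le> K * nrm f"
    by (rule uniform_point_eval_bound) blast
  have "cmod (poly ((pderiv ^^ m) p) 0) \<le> fact m * K / r ^ m * nrm (polyfun Om p)" for p
  proof -
    have "cmod ((deriv ^^ m) (poly p) 0) \<le> fact m * (K * nrm (polyfun Om p)) / r ^ m"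
    proof (rule Cauchy_inequality)
      show "poly p holomorphic_on ball 0 r" "continuous_on (cball 0 r) (poly p)"
        by (auto intro: holomorphic_intros continuous_intros)
      show "cmod (poly p z) \<le> K * nrm (polyfun Om p)" if "cmod (0 - z) = r" for z
        using K[OF polyfun_in_H, of z p] that r(2) by (auto simp: polyfun_def)
    qed (rule r(1))
    then show ?thesis
      by (simp add: higher_deriv_poly)
  qed
  then show ?thesis
    unfolding reproducible_order_def by blast
qed

lemma reproducible_multiset_iff:
  "reproducible_multiset Om ip Z \<longleftrightarrow>
    (\<forall>\<beta> j. \<beta> \<in># Z \<longrightarrow> j < count Z \<beta> \<longrightarrow> reproducible_order Om ip \<beta> j)"
  unfolding reproducible_multiset_def
proof (intro iffI allI impI)
  fix \<beta> j assume R: "\<forall>\<beta>. \<beta> \<in># Z \<longrightarrow> \<beta> \<noteq> 0 \<longrightarrow> reproducible_order Om ip \<beta> (count Z \<beta> - 1)"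
    and "\<beta> \<in># Z" "j < count Z \<beta>"
  show "reproducible_order Om ip \<beta> j"
  proof (cases "\<beta> = 0")
    case False
    then show ?thesis
      using R \<open>\<beta> \<in># Z\<close> \<open>j < count Z \<beta>\<close> by (auto intro: reproducible_order_le[of _ "count Z \<beta> - 1"])
  qed (simp add: zero_reproducible)
next
  fix \<beta> assume R: "\<forall>\<beta> j. \<beta> \<in># Z \<longrightarrow> j < count Z \<beta> \<longrightarrow> reproducible_order Om ip \<beta> j"
    and "\<beta> \<in># Z" "\<beta> \<noteq> 0"
  moreover have "count Z \<beta> - 1 < count Z \<beta>"
    using \<open>\<beta> \<in># Z\<close> by (simp add: Suc_le_eq)
  ultimately show "reproducible_order Om ip \<beta> (count Z \<beta> - 1)"
    by blast
qed

lemma reproducible_multiset_add_mset: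
  "reproducible_multiset Om ip (add_mset \<gamma> Z) \<longleftrightarrow>
    reproducible_multiset Om ip Z \<and> reproducible_order Om ip \<gamma> (count Z \<gamma>)"
  unfolding reproducible_multiset_iff
  by (auto simp: less_Suc_eq count_inI split: if_splits)

lemma closed_subspace_orthogonal:
  assumes k: "k \<in> H"
  shows "closed_subspace {f \<in> H. ip f k = 0}"
  unfolding closed_subspace_def
proof (intro conjI ballI allI impI)
  fix f assume f: "f \<in> H" and approx: "\<forall>e>0. \<exists>g\<in>{f \<in> H. ip f k = 0}. nrm (fdiff f g) < e"
  have bound: "cmod (ip f k) \<le> e * nrm k" if "e > 0" for e
  proof -
    obtain g where g: "g \<in> H" "ip g k = 0" "nrm (fdiff f g) < e"
      using approx \<open>e > 0\<close> by blast
    then have "cmod (ip f k) \<le> nrm (fdiff f g) * nrm k"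
      using ip_diff_bound[OF f g(1) k] by simp
    also have "\<dots> \<le> e * nrm k"
      using g(3) k by (intro mult_right_mono) auto
    finally show ?thesis .
  qed
  have "cmod (ip f k) \<le> 0 + e" if "e > 0" for e
  proof -
    have "e / (nrm k + 1) > 0"
      using that k by (simp add: add_nonneg_pos)
    then have "cmod (ip f k) \<le> e / (nrm k + 1) * nrm k"
      by (rule bound)
    also have "\<dots> \<le> e / (nrm k + 1) * (nrm k + 1)"
      using that k by (intro mult_left_mono) auto
    also have "\<dots> = e"
      using hnorm_nonneg[OF k] by (simp add: field_simps)
    finally show ?thesis
      by simp
  qed
  then have "cmod (ip f k) \<le> 0"
    by (rule field_le_epsilon)
  then show "f \<in> {f \<in> H. ip f k = 0}"
    using f by simp
qed (use k in \<open>auto simp: ip_add_left ip_scale_left\<close>)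

lemma closed_subspace_Int:
  assumes V: "closed_subspace V" and W: "closed_subspace W"
  shows "closed_subspace (V \<inter> W)"
  unfolding closed_subspace_def
proof (intro conjI ballI allI impI)
  fix f assume "f \<in> H" and approx: "\<forall>e>0. \<exists>g\<in>V \<inter> W. nrm (fdiff f g) < e"
  then have "f \<in> V" "f \<in> W"
    by (intro closed_subspaceD(5)[OF V] closed_subspaceD(5)[OF W]; fastforce)+
  then show "f \<in> V \<inter> W"
    by blast
qed (use closed_subspaceD[OF V] closed_subspaceD[OF W] in auto)

lemma closed_subspace_H: "closed_subspace H"
  unfolding closed_subspace_def by auto

definition vanishing_space :: "complex multiset \<Rightarrow> cfun set" where
  "vanishing_space Z = {f \<in> H. \<forall>\<beta> j. \<beta> \<in># Z \<longrightarrow> j < count Z \<beta> \<longrightarrow> deriv_at Om H ip f \<beta> j = 0}"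

lemma vanishing_space_empty [simp]: "vanishing_space {#} = H"
  by (simp add: vanishing_space_def)

lemma vanishing_space_add_mset:
  "vanishing_space (add_mset \<gamma> Z) = vanishing_space Z \<inter> {f \<in> H. deriv_at Om H ip f \<gamma> (count Z \<gamma>) = 0}"
proof (intro equalityI subsetI)
  fix f assume f: "f \<in> vanishing_space (add_mset \<gamma> Z)"
  have "deriv_at Om H ip f \<beta> j = 0" if "\<beta> \<in># Z" "j < count Z \<beta>" for \<beta> j
    using f that by (auto simp: vanishing_space_def)
  moreover have "deriv_at Om H ip f \<gamma> (count Z \<gamma>) = 0"
    using f by (auto simp: vanishing_space_def)
  ultimately show "f \<in> vanishing_space Z \<inter> {f \<in> H. deriv_at Om H ip f \<gamma> (count Z \<gamma>) = 0}"
    using f by (auto simp: vanishing_space_def)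
next
  fix f assume f: "f \<in> vanishing_space Z \<inter> {f \<in> H. deriv_at Om H ip f \<gamma> (count Z \<gamma>) = 0}"
  have "deriv_at Om H ip f \<beta> j = 0" if "j < count (add_mset \<gamma> Z) \<beta>" for \<beta> j
  proof (cases "\<beta> = \<gamma> \<and> j = count Z \<gamma>")
    case False
    then have "j < count Z \<beta>"
      using that by (auto split: if_splits)
    then show ?thesis
      using f by (auto simp: vanishing_space_def count_inI)
  qed (use f in auto)
  then show "f \<in> vanishing_space (add_mset \<gamma> Z)"
    using f by (auto simp: vanishing_space_def)
qed

lemma closed_subspace_vanishing_space:
  "reproducible_multiset Om ip Z \<Longrightarrow> closed_subspace (vanishing_space Z)"
proof (induction Z)
  case (add \<gamma> Z)
  then have "closed_subspace (vanishing_space Z)" "reproducible_order Om ip \<gamma> (count Z \<gamma>)"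
    by (simp_all add: reproducible_multiset_add_mset)
  then show ?case
    unfolding vanishing_space_add_mset deriv_at_def
    by (intro closed_subspace_Int closed_subspace_orthogonal kern_in_H)
qed (simp add: closed_subspace_H)

lemma polyfun_mult_root_poly_in_vanishing_space:
  assumes "reproducible_multiset Om ip Z"
  shows "polyfun Om (r * root_poly Z) \<in> vanishing_space Z"
proof -
  have "deriv_at Om H ip (polyfun Om (r * root_poly Z)) \<beta> j = 0" if "\<beta> \<in># Z" "j < count Z \<beta>" for \<beta> j
  proof -
    have "[:-\<beta>, 1:] ^ count Z \<beta> dvd r * root_poly Z"
      by (intro dvd_mult linear_power_count_dvd_root_poly)
    then have "poly ((pderiv ^^ j) (r * root_poly Z)) \<beta> = 0"
      using \<open>j < count Z \<beta>\<close> by (rule poly_higher_pderiv_eq_0_if_dvd)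
    moreover have "reproducible_order Om ip \<beta> j"
      using assms that by (simp add: reproducible_multiset_iff)
    ultimately show ?thesis
      by (simp add: deriv_at_polyfun)
  qed
  then show ?thesis
    by (simp add: vanishing_space_def)
qed

text \<open>Adding a linear factor at \<open>\<gamma>\<close> to \<open>P\<close> imposes exactly one more condition, the vanishing of the
  derivative of order \<open>order \<gamma> P\<close> at \<open>\<gamma>\<close>: an approximant \<open>r P\<close> of \<open>f\<close> is corrected by the constant
  multiple \<open>r(\<gamma>) P\<close>, whose size is controlled by that derivative.\<close>
lemma invsub_linear_mult_if_deriv_vanishes:
  assumes "P \<noteq> 0" and repr: "reproducible_order Om ip \<gamma> (order \<gamma> P)"
    and f: "f \<in> invsub H ip (polyfun Om P)" and f0: "deriv_at Om H ip f \<gamma> (order \<gamma> P) = 0"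
  shows "f \<in> invsub H ip (polyfun Om ([:-\<gamma>, 1:] * P))"
proof -
  define m where "m = order \<gamma> P"
  define L where "L = [:-\<gamma>, 1:]"
  define k where "k = kern Om H ip \<gamma> m"
  define c0 where "c0 = poly ((pderiv ^^ m) P) \<gamma>"
  define K where "K = nrm k * nrm (polyfun Om P) / cmod c0"
  have kH: "k \<in> H"
    using repr by (simp add: k_def m_def kern_in_H)
  have fH: "f \<in> H"
    using f invsub_subset_H by blast
  have "c0 \<noteq> 0"
    using poly_higher_pderiv_order(2)[OF \<open>P \<noteq> 0\<close>] by (simp add: c0_def m_def)
  have "K \<ge> 0"
    using kH by (simp add: K_def)
  show ?thesis
    unfolding invsub_polyfun_eq hclosure_def polyfun_multiples_def
  proof (intro CollectI conjI allI impI fH)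
    fix e :: real assume "e > 0"
    define \<delta> where "\<delta> = e / (1 + K)"
    have "\<delta> > 0"
      using \<open>e > 0\<close> \<open>K \<ge> 0\<close> by (simp add: \<delta>_def)
    then obtain r where r: "nrm (fdiff f (polyfun Om (r * P))) < \<delta>"
      using f unfolding invsub_polyfun_eq hclosure_def polyfun_multiples_def by blast
    define s where "s = synthetic_div r \<gamma>"
    define t where "t = poly r \<gamma>"
    have "r = L * s + [:t:]"
      by (simp only: L_def s_def t_def synthetic_div_correct')
    then have rP: "r * P = s * (L * P) + Polynomial.smult t P"
      by (simp add: ring_distribs mult_ac)
    have "L * [:-\<gamma>, 1:] ^ m dvd L * P"
      using order_1[of \<gamma> P] unfolding m_def by (rule mult_dvd_mono[OF dvd_refl])
    then have "[:-\<gamma>, 1:] ^ Suc m dvd s * (L * P)"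
      unfolding L_def power_Suc by (rule dvd_mult)
    then have "poly ((pderiv ^^ m) (s * (L * P))) \<gamma> = 0"
      by (rule poly_higher_pderiv_eq_0_if_dvd) simp
    then have "deriv_at Om H ip (polyfun Om (r * P)) \<gamma> m = t * c0"
      using repr unfolding rP
      by (simp add: deriv_at_polyfun m_def c0_def higher_pderiv_add higher_pderiv_smult)
    then have "cmod t * cmod c0 \<le> nrm (fdiff f (polyfun Om (r * P))) * nrm k"
      using deriv_at_diff_bound[OF repr fH polyfun_in_H, of "r * P"] f0
      by (simp add: k_def m_def norm_mult)
    also have "\<dots> \<le> \<delta> * nrm k"
      using r kH by (intro mult_right_mono) auto
    finally have "cmod t * cmod c0 * nrm (polyfun Om P) \<le> \<delta> * nrm k * nrm (polyfun Om P)"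
      by (rule mult_right_mono) simp
    then have t_bound: "cmod t * nrm (polyfun Om P) \<le> \<delta> * K"
      using \<open>c0 \<noteq> 0\<close> by (simp add: K_def field_simps mult_ac)
    have "fdiff f (polyfun Om (s * (L * P))) = fadd (fdiff f (polyfun Om (r * P))) (fscale t (polyfun Om P))"
      by (simp add: rP polyfun_add polyfun_smult)
    then have "nrm (fdiff f (polyfun Om (s * (L * P)))) \<le> nrm (fdiff f (polyfun Om (r * P))) + cmod t * nrm (polyfun Om P)"
      using hnorm_triangle[OF H_diff[OF fH polyfun_in_H] H_scale[OF polyfun_in_H]] hnorm_scale[OF polyfun_in_H]
      by simp
    also have "\<dots> < \<delta> + \<delta> * K"
      using r t_bound by linarith
    also have "\<dots> = \<delta> * (1 + K)"
      by (simp add: distrib_left)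
    also have "\<dots> = e"
      using \<open>K \<ge> 0\<close> by (simp add: \<delta>_def)
    finally show "\<exists>a\<in>{polyfun Om (r * ([:-\<gamma>, 1:] * P)) | r. True}. nrm (fdiff f a) < e"
      unfolding L_def by blast
  qed
qed

theorem invsub_root_poly:
  "reproducible_multiset Om ip Z \<Longrightarrow> invsub H ip (polyfun Om (root_poly Z)) = vanishing_space Z"
proof (induction Z)
  case (add \<gamma> Z)
  have Z: "reproducible_multiset Om ip Z" and repr: "reproducible_order Om ip \<gamma> (count Z \<gamma>)"
    using add.prems by (simp_all add: reproducible_multiset_add_mset)
  show ?case
  proof
    show "invsub H ip (polyfun Om (root_poly (add_mset \<gamma> Z))) \<subseteq> vanishing_space (add_mset \<gamma> Z)"
      unfolding invsub_polyfun_eq polyfun_multiples_def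
      using polyfun_mult_root_poly_in_vanishing_space[OF add.prems]
      by (intro hclosure_subset_closed_subspace closed_subspace_vanishing_space add.prems) blast
    show "vanishing_space (add_mset \<gamma> Z) \<subseteq> invsub H ip (polyfun Om (root_poly (add_mset \<gamma> Z)))"
      using invsub_linear_mult_if_deriv_vanishes[of "root_poly Z" \<gamma>] repr add.IH[OF Z]
      by (auto simp: vanishing_space_add_mset order_root_poly)
  qed
qed (simp add: invsub_one)

lemma poly_eval_bounded_if_notin_invsub:
  assumes "polyfun Om P \<notin> invsub H ip (polyfun Om ([:-\<beta>, 1:] * P))"
  obtains \<epsilon> where "\<epsilon> > 0" "\<And>r. cmod (poly r \<beta>) * \<epsilon> \<le> nrm (polyfun Om (r * P))"
proof -
  obtain \<epsilon> where "\<epsilon> > 0" and far: "\<And>s. \<epsilon> \<le> nrm (fdiff (polyfun Om P) (polyfun Om (s * ([:-\<beta>, 1:] * P))))"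
    using assms unfolding invsub_polyfun_eq hclosure_def polyfun_multiples_def by (auto simp: not_less)
  have "cmod (poly r \<beta>) * \<epsilon> \<le> nrm (polyfun Om (r * P))" for r
  proof (cases "poly r \<beta> = 0")
    case False
    define t where "t = poly r \<beta>"
    define L where "L = [:-\<beta>, 1:]"
    define s' where "s' = synthetic_div r \<beta>"
    define s where "s = Polynomial.smult (- 1 / t) s'"
    have "t \<noteq> 0"
      using False by (simp add: t_def)
    have "r = L * s' + [:t:]"
      by (simp only: L_def t_def s'_def synthetic_div_correct')
    then have "r * P = Polynomial.smult t (P - s * (L * P))"
      using \<open>t \<noteq> 0\<close> by (simp add: s_def ring_distribs mult_ac smult_diff_right smult_add_right)
    then have "polyfun Om (r * P) = fscale t (fdiff (polyfun Om P) (polyfun Om (s * ([:-\<beta>, 1:] * P))))"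
      by (simp add: L_def polyfun_smult polyfun_diff)
    then have "nrm (polyfun Om (r * P)) = cmod t * nrm (fdiff (polyfun Om P) (polyfun Om (s * ([:-\<beta>, 1:] * P))))"
      by (simp add: hnorm_scale H_diff)
    then show ?thesis
      using mult_left_mono[OF far[of s] norm_ge_zero[of t]] by (simp add: t_def mult.commute)
  qed simp
  with \<open>\<epsilon> > 0\<close> show ?thesis
    by (rule that)
qed

lemma hnorm_polyfun_sum:
  fixes n :: nat
  shows "nrm (polyfun Om (\<Sum>i<n. Polynomial.smult (c i) (F i))) \<le> (\<Sum>i<n. cmod (c i) * nrm (polyfun Om (F i)))"
proof (induction n)
  case (Suc n)
  have "polyfun Om (\<Sum>i<Suc n. Polynomial.smult (c i) (F i)) =
      fadd (polyfun Om (\<Sum>i<n. Polynomial.smult (c i) (F i))) (fscale (c n) (polyfun Om (F n)))"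
    by (simp add: polyfun_add polyfun_smult)
  then have "nrm (polyfun Om (\<Sum>i<Suc n. Polynomial.smult (c i) (F i))) \<le>
      nrm (polyfun Om (\<Sum>i<n. Polynomial.smult (c i) (F i))) + cmod (c n) * nrm (polyfun Om (F n))"
    using hnorm_triangle[OF polyfun_in_H H_scale[OF polyfun_in_H]] hnorm_scale[OF polyfun_in_H] by metis
  then show ?case
    using Suc.IH by simp
qed simp

text \<open>If the derivatives of order below \<open>m\<close> at \<open>\<beta>\<close> are bounded, so is the remainder modulo
  \<open>(z - \<beta>)\<^sup>m\<close>, being the Taylor polynomial built from those derivatives.\<close>
lemma remainder_linear_power_bounded:
  assumes lower: "\<And>i. i < m \<Longrightarrow> reproducible_order Om ip \<beta> i"
  obtains K where "\<And>q. nrm (polyfun Om (q mod [:-\<beta>, 1:] ^ m)) \<le> K * nrm (polyfun Om q)"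
proof -
  define C where "C i = (SOME C. \<forall>p. cmod (poly ((pderiv ^^ i) p) \<beta>) \<le> C * nrm (polyfun Om p))" for i
  have C: "cmod (poly ((pderiv ^^ i) p) \<beta>) \<le> \<bar>C i\<bar> * nrm (polyfun Om p)" if "i < m" for i p
  proof -
    have "\<exists>C. \<forall>p. cmod (poly ((pderiv ^^ i) p) \<beta>) \<le> C * nrm (polyfun Om p)"
      using lower[OF that] unfolding reproducible_order_def .
    then have "cmod (poly ((pderiv ^^ i) p) \<beta>) \<le> C i * nrm (polyfun Om p)"
      unfolding C_def by (rule someI2_ex) blast
    also have "\<dots> \<le> \<bar>C i\<bar> * nrm (polyfun Om p)"
      by (rule mult_right_mono) simp_all
    finally show ?thesis .
  qed
  define K where "K = (\<Sum>i<m. \<bar>C i\<bar> / fact i * nrm (polyfun Om ([:-\<beta>, 1:] ^ i)))"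
  have "nrm (polyfun Om (q mod [:-\<beta>, 1:] ^ m)) \<le> K * nrm (polyfun Om q)" for q
  proof -
    define T where "T = q mod [:-\<beta>, 1:] ^ m"
    have "T = 0 \<or> degree T < m"
      using degree_mod_less[of "[:-\<beta>, 1:] ^ m" q] by (auto simp: T_def degree_linear_power)
    then have taylor: "T = (\<Sum>i<m. Polynomial.smult (poly ((pderiv ^^ i) T) \<beta> / fact i) ([:-\<beta>, 1:] ^ i))"
      by (rule taylor_expansion_linear_powers)
    have same_derivs: "poly ((pderiv ^^ i) T) \<beta> = poly ((pderiv ^^ i) q) \<beta>" if "i < m" for i
    proof -
      have "[:-\<beta>, 1:] ^ m dvd q - T"
        by (simp add: T_def minus_mod_eq_mult_div)
      then have "poly ((pderiv ^^ i) (q - T)) \<beta> = 0"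
        using that by (rule poly_higher_pderiv_eq_0_if_dvd)
      then show ?thesis
        by (simp add: higher_pderiv_diff)
    qed
    have "nrm (polyfun Om T) \<le> (\<Sum>i<m. cmod (poly ((pderiv ^^ i) T) \<beta> / fact i) * nrm (polyfun Om ([:-\<beta>, 1:] ^ i)))"
      using hnorm_polyfun_sum[of "\<lambda>i. poly ((pderiv ^^ i) T) \<beta> / fact i" "\<lambda>i. [:-\<beta>, 1:] ^ i" m]
      by (simp only: taylor[symmetric])
    also have "\<dots> \<le> (\<Sum>i<m. \<bar>C i\<bar> / fact i * nrm (polyfun Om ([:-\<beta>, 1:] ^ i)) * nrm (polyfun Om q))"
    proof (rule sum_mono)
      fix i assume "i \<in> {..<m}"
      then have "cmod (poly ((pderiv ^^ i) T) \<beta>) \<le> \<bar>C i\<bar> * nrm (polyfun Om q)"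
        using C[of i q] same_derivs[of i] by simp
      then have "cmod (poly ((pderiv ^^ i) T) \<beta> / fact i) \<le> \<bar>C i\<bar> * nrm (polyfun Om q) / fact i"
        by (simp add: norm_divide divide_right_mono)
      then have "cmod (poly ((pderiv ^^ i) T) \<beta> / fact i) * nrm (polyfun Om ([:-\<beta>, 1:] ^ i))
          \<le> \<bar>C i\<bar> * nrm (polyfun Om q) / fact i * nrm (polyfun Om ([:-\<beta>, 1:] ^ i))"
        by (rule mult_right_mono) simp
      then show "cmod (poly ((pderiv ^^ i) T) \<beta> / fact i) * nrm (polyfun Om ([:-\<beta>, 1:] ^ i))
          \<le> \<bar>C i\<bar> / fact i * nrm (polyfun Om ([:-\<beta>, 1:] ^ i)) * nrm (polyfun Om q)"
        by (simp add: ac_simps)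
    qed
    also have "\<dots> = K * nrm (polyfun Om q)"
      by (simp add: K_def sum_distrib_right)
    finally show ?thesis
      by (simp add: T_def)
  qed
  then show ?thesis
    by (rule that)
qed

lemma invsub_linear_mult_eq_if_not_reproducible:
  assumes "P \<noteq> 0" and lower: "\<And>i. i < order \<beta> P \<Longrightarrow> reproducible_order Om ip \<beta> i"
    and not_repr: "\<not> reproducible_order Om ip \<beta> (order \<beta> P)"
  shows "invsub H ip (polyfun Om ([:-\<beta>, 1:] * P)) = invsub H ip (polyfun Om P)"
proof
  define m where "m = order \<beta> P"
  define L where "L = [:-\<beta>, 1:]"
  have "polyfun Om P \<in> invsub H ip (polyfun Om (L * P))"
  proof (rule ccontr)
    assume "polyfun Om P \<notin> invsub H ip (polyfun Om (L * P))"
    then obtain \<epsilon> where "\<epsilon> > 0" and eval: "\<And>r. cmod (poly r \<beta>) * \<epsilon> \<le> nrm (polyfun Om (r * P))"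
      unfolding L_def by (rule poly_eval_bounded_if_notin_invsub) blast
    obtain K where K: "\<And>q. nrm (polyfun Om (q mod L ^ m)) \<le> K * nrm (polyfun Om q)"
      using remainder_linear_power_bounded[of m \<beta>] lower unfolding L_def m_def by blast
    obtain T where PT: "P = L ^ m * T"
      using order_1[of \<beta> P] unfolding L_def m_def by (elim dvdE)
    obtain CT where CT: "CT \<ge> 0" "\<forall>f\<in>H. nrm (poly_mult T f) \<le> CT * nrm f"
      using poly_mult_bounded by blast
    have "cmod (poly ((pderiv ^^ m) q) \<beta>) \<le> fact m * CT / \<epsilon> * (1 + K) * nrm (polyfun Om q)" for q
    proof -
      define r where "r = q div L ^ m"
      have q: "q = L ^ m * r + q mod L ^ m"
        by (simp add: r_def)
      have "(pderiv ^^ m) (q mod L ^ m) = 0"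
        using degree_mod_less[of "L ^ m" q] by (auto simp: L_def degree_linear_power higher_pderiv_eq_0)
      then have "poly ((pderiv ^^ m) q) \<beta> = fact m * poly r \<beta>"
        by (subst q) (simp add: higher_pderiv_add L_def poly_higher_pderiv_linear_power_mult)
      then have deriv_eq: "cmod (poly ((pderiv ^^ m) q) \<beta>) = fact m * cmod (poly r \<beta>)"
        by (simp add: norm_mult)
      have "polyfun Om (r * P) = poly_mult T (polyfun Om (L ^ m * r))"
        by (simp add: PT poly_mult_polyfun mult_ac)
      then have "cmod (poly r \<beta>) * \<epsilon> \<le> CT * nrm (polyfun Om (L ^ m * r))"
        using eval[of r] CT(2) polyfun_in_H[of "L ^ m * r"] by (metis order.trans)
      then have "cmod (poly r \<beta>) \<le> CT / \<epsilon> * nrm (polyfun Om (L ^ m * r))"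
        using \<open>\<epsilon> > 0\<close> by (simp add: field_simps)
      also have "\<dots> \<le> CT / \<epsilon> * ((1 + K) * nrm (polyfun Om q))"
      proof -
        have "L ^ m * r = q - q mod L ^ m"
          by (simp add: r_def minus_mod_eq_mult_div)
        then have "polyfun Om (L ^ m * r) = fdiff (polyfun Om q) (polyfun Om (q mod L ^ m))"
          by (simp add: polyfun_diff)
        then have "nrm (polyfun Om (L ^ m * r)) \<le> nrm (polyfun Om q) + nrm (polyfun Om (q mod L ^ m))"
          by (simp add: hnorm_diff_le)
        then show ?thesis
          using K[of q] CT(1) \<open>\<epsilon> > 0\<close> by (intro mult_left_mono) (simp_all add: algebra_simps)
      qed
      finally have "fact m * cmod (poly r \<beta>) \<le> fact m * (CT / \<epsilon> * ((1 + K) * nrm (polyfun Om q)))"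
        by (rule mult_left_mono) simp
      then show ?thesis
        using deriv_eq by (simp add: ac_simps)
    qed
    then have "reproducible_order Om ip \<beta> m"
      unfolding reproducible_order_def by blast
    then show False
      using not_repr by (simp add: m_def)
  qed
  then show "invsub H ip (polyfun Om P) \<subseteq> invsub H ip (polyfun Om ([:-\<beta>, 1:] * P))"
    unfolding L_def by (rule invsub_subset_if_mem)
qed (rule invsub_mult_subset)

lemma invsub_mult_cong:
  "invsub H ip (polyfun Om s) = invsub H ip (polyfun Om t) \<Longrightarrow>
    invsub H ip (polyfun Om (q * s)) = invsub H ip (polyfun Om (q * t))"
  using invsub_mult_mono polyfun_mult_in_invsub[of 1] by (metis equalityI mult_1)

lemma invsub_const: "c \<noteq> 0 \<Longrightarrow> invsub H ip (polyfun Om [:c:]) = H"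
proof
  assume "c \<noteq> 0"
  then have "polyfun Om 1 \<in> invsub H ip (polyfun Om [:c:])"
    using polyfun_mult_in_invsub[of "[:1 / c:]" "[:c:]"] by (simp add: one_pCons)
  then show "H \<subseteq> invsub H ip (polyfun Om [:c:])"
    using invsub_subset_if_mem invsub_one by blast
qed (rule invsub_subset_H)

text \<open>Every \<open>[p]\<close> is generated by the root polynomial of a reproducible multiset with the same
  order at \<open>0\<close>: split off linear factors one at a time, discarding those at which the required
  derivative is not bounded.\<close>
theorem invsub_eq_invsub_root_poly:
  fixes p :: "complex poly"
  assumes "p \<noteq> 0"
  obtains Z where "reproducible_multiset Om ip Z" "count Z 0 = order 0 p"
    "invsub H ip (polyfun Om p) = invsub H ip (polyfun Om (root_poly Z))"
  using assms
proof (induction "degree p" arbitrary: p thesis rule: less_induct)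
  case less
  show ?case
  proof (cases "degree p = 0")
    case True
    then obtain c where "p = [:c:]" "c \<noteq> 0"
      using less.prems(2) by (metis degree_eq_zeroE pCons_eq_0_iff)
    then show ?thesis
      using less.prems(1)[of "{#}"] invsub_const invsub_one
      by (simp add: reproducible_multiset_def order_0I)
  next
    case False
    then have "\<not> constant (poly p)"
      by (simp add: constant_degree)
    then obtain \<beta> where "poly p \<beta> = 0"
      using fundamental_theorem_of_algebra by blast
    then obtain s where ps: "p = [:-\<beta>, 1:] * s"
      by (metis dvdE poly_eq_0_iff_dvd)
    then have "s \<noteq> 0"
      using less.prems(2) by auto
    have "degree p = degree [:-\<beta>, 1:] + degree s"
      unfolding ps using \<open>s \<noteq> 0\<close> by (rule degree_mult_eq[rotated]) simp
    then have "degree s < degree p"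
      by simp
    obtain Zs where Zs: "reproducible_multiset Om ip Zs" "count Zs 0 = order 0 s"
      and inv_s: "invsub H ip (polyfun Om s) = invsub H ip (polyfun Om (root_poly Zs))"
      by (rule less.hyps[OF \<open>degree s < degree p\<close> _ \<open>s \<noteq> 0\<close>])
    have inv_p: "invsub H ip (polyfun Om p) = invsub H ip (polyfun Om ([:-\<beta>, 1:] * root_poly Zs))"
      unfolding ps by (rule invsub_mult_cong[OF inv_s])
    have order_p: "order 0 p = order 0 [:-\<beta>, 1:] + order 0 s"
      unfolding ps by (rule order_mult) (use less.prems(2) ps in simp)
    show ?thesis
    proof (cases "reproducible_order Om ip \<beta> (count Zs \<beta>)")
      case True
      then have Z: "reproducible_multiset Om ip (add_mset \<beta> Zs)"
        using Zs(1) by (simp add: reproducible_multiset_add_mset)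
      have count: "count (add_mset \<beta> Zs) 0 = order 0 p"
      proof (cases "\<beta> = 0")
        case True
        then show ?thesis
          using order_p Zs(2) order_power_n_n[of "0 :: complex" 1] by simp
      qed (use order_p Zs(2) in \<open>simp add: order_0I\<close>)
      have "invsub H ip (polyfun Om p) = invsub H ip (polyfun Om (root_poly (add_mset \<beta> Zs)))"
        using inv_p by simp
      then show ?thesis
        by (rule less.prems(1)[OF Z count])
    next
      case False
      then have "\<beta> \<noteq> 0"
        using zero_reproducible by blast
      have "invsub H ip (polyfun Om ([:-\<beta>, 1:] * root_poly Zs)) = invsub H ip (polyfun Om (root_poly Zs))"
        using False Zs(1)
        by (intro invsub_linear_mult_eq_if_not_reproducible)
          (auto simp: order_root_poly reproducible_multiset_iff count_inI)
      then have "invsub H ip (polyfun Om p) = invsub H ip (polyfun Om (root_poly Zs))"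
        using inv_p by simp
      moreover have "count Zs 0 = order 0 p"
        using order_p Zs(2) \<open>\<beta> \<noteq> 0\<close> by (simp add: order_0I)
      ultimately show ?thesis
        using less.prems(1)[OF Zs(1)] by blast
    qed
  qed
qed

definition first_column :: "cfun \<Rightarrow> cfun list \<Rightarrow> nat \<Rightarrow> cfun" where
  "first_column u vs i = (if i = 0 then u else vs ! (i - 1))"

definition minor_mat :: "cfun \<Rightarrow> cfun list \<Rightarrow> nat \<Rightarrow> complex mat" where
  "minor_mat u vs i = mat (length vs) (length vs)
     (\<lambda>(r, c). ip (first_column u vs (if r < i then r else Suc r)) (vs ! c))"

definition gram :: "cfun list \<Rightarrow> complex mat" where
  "gram vs = mat (length vs) (length vs) (\<lambda>(r, c). ip (vs ! r) (vs ! c))"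

lemma Dfun_eq_sum:
  "Dfun ip u vs = (\<lambda>z. \<Sum>i\<le>length vs. ((-1) ^ i * det (minor_mat u vs i)) * first_column u vs i z)"
  unfolding Dfun_def minor_mat_def first_column_def Let_def by simp

lemma minor_mat_0: "minor_mat u vs 0 = gram vs"
  unfolding minor_mat_def gram_def first_column_def by (rule eq_matI) auto

lemma first_column_in_H:
  "u \<in> H \<Longrightarrow> set vs \<subseteq> H \<Longrightarrow> i \<le> length vs \<Longrightarrow> first_column u vs i \<in> H"
  unfolding first_column_def by (auto simp: nth_mem subset_iff)

lemma
  assumes u: "u \<in> H" and vs: "set vs \<subseteq> H"
  shows Dfun_in_H: "Dfun ip u vs \<in> H"
    and ip_Dfun_left: "g \<in> H \<Longrightarrow>
      ip (Dfun ip u vs) g = (\<Sum>i\<le>length vs. ((-1) ^ i * det (minor_mat u vs i)) * ip (first_column u vs i) g)"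
  unfolding Dfun_eq_sum using first_column_in_H[OF u vs]
  by (auto intro!: sum_in_H ip_sum_left)

text \<open>Pairing the formal determinant with \<open>v\<^sub>c\<close> gives the determinant of the matrix whose first
  column is replaced by that of \<open>v\<^sub>c\<close>, which repeats column \<open>c + 1\<close>.\<close>
lemma ip_Dfun_nth:
  assumes u: "u \<in> H" and vs: "set vs \<subseteq> H" and c: "c < length vs"
  shows "ip (Dfun ip u vs) (vs ! c) = 0"
proof -
  define N where "N = length vs"
  define v where "v = vs ! c"
  have vH: "v \<in> H"
    unfolding v_def using vs c by (auto simp: nth_mem subset_iff)
  define A where "A = mat (Suc N) (Suc N)
    (\<lambda>(i, j). if j = 0 then ip (first_column u vs i) v else ip (first_column u vs i) (vs ! (j - 1)))"
  have A: "A \<in> carrier_mat (Suc N) (Suc N)"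
    by (simp add: A_def)
  have delete: "mat_delete A i 0 = minor_mat u vs i" if "i < Suc N" for i
    by (rule eq_matI) (auto simp: A_def minor_mat_def mat_delete_def N_def)
  have "det A = (\<Sum>i<Suc N. A $$ (i, 0) * cofactor A i 0)"
    by (rule laplace_expansion_column[OF A]) simp
  also have "\<dots> = (\<Sum>i<Suc N. ((-1) ^ i * det (minor_mat u vs i)) * ip (first_column u vs i) v)"
  proof (rule sum.cong)
    fix i assume "i \<in> {..<Suc N}"
    then have "A $$ (i, 0) = ip (first_column u vs i) v"
      and "cofactor A i 0 = (-1) ^ i * det (minor_mat u vs i)"
      by (simp_all add: A_def cofactor_def delete[symmetric])
    then show "A $$ (i, 0) * cofactor A i 0 = ((-1) ^ i * det (minor_mat u vs i)) * ip (first_column u vs i) v"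
      by (simp add: mult.commute)
  qed simp
  also have "\<dots> = ip (Dfun ip u vs) v"
    using ip_Dfun_left[OF u vs vH] by (simp add: N_def lessThan_Suc_atMost)
  finally have "det A = ip (Dfun ip u vs) v" .
  moreover have "col A 0 = col A (Suc c)"
    using c by (intro eq_vecI) (auto simp: A_def v_def N_def)
  then have "det A = 0"
    using det_identical_columns[OF A, of 0 "Suc c"] c by (simp add: N_def)
  ultimately show ?thesis
    by (simp add: v_def)
qed

lemma ip_Dfun_orthogonal:
  assumes u: "u \<in> H" and vs: "set vs \<subseteq> H" and f: "f \<in> H"
    and perp: "\<And>c. c < length vs \<Longrightarrow> ip (vs ! c) f = 0"
  shows "ip (Dfun ip u vs) f = det (gram vs) * ip u f"
proof -
  have "ip (Dfun ip u vs) f = (\<Sum>i\<le>length vs. if i = 0 then det (gram vs) * ip u f else 0)"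
    unfolding ip_Dfun_left[OF u vs f]
    by (intro sum.cong) (auto simp: first_column_def minor_mat_0 perp)
  then show ?thesis
    by simp
qed

lemma closed_subspace_orthogonal_list:
  "set vs \<subseteq> H \<Longrightarrow> closed_subspace {f \<in> H. \<forall>c<length vs. ip f (vs ! c) = 0}"
proof (induction vs)
  case (Cons v vs)
  have "{f \<in> H. \<forall>c<length (v # vs). ip f ((v # vs) ! c) = 0} =
      {f \<in> H. ip f v = 0} \<inter> {f \<in> H. \<forall>c<length vs. ip f (vs ! c) = 0}"
    by (auto simp: All_less_Suc2)
  then show ?case
    using Cons by (simp add: closed_subspace_Int closed_subspace_orthogonal)
qed (simp add: closed_subspace_H)

lemma proj_eq_Dfun:
  assumes u: "u \<in> H" and vs: "set vs \<subseteq> H" and G: "det (gram vs) \<noteq> 0"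
    and V: "V = {f \<in> H. \<forall>c<length vs. ip f (vs ! c) = 0}"
  shows "proj ip V u = fscale (1 / det (gram vs)) (Dfun ip u vs)"
proof -
  have "closed_subspace V"
    unfolding V by (rule closed_subspace_orthogonal_list[OF vs])
  moreover have DH: "Dfun ip u vs \<in> H"
    by (rule Dfun_in_H[OF u vs])
  moreover have "fscale (1 / det (gram vs)) (Dfun ip u vs) \<in> V"
    unfolding V
  proof (intro CollectI conjI allI impI)
    show "fscale (1 / det (gram vs)) (Dfun ip u vs) \<in> H"
      using DH by (rule H_scale)
    fix c assume "c < length vs"
    then have vcH: "vs ! c \<in> H"
      using vs by (auto simp: nth_mem subset_iff)
    show "ip (fscale (1 / det (gram vs)) (Dfun ip u vs)) (vs ! c) = 0"
      unfolding ip_scale_left[OF DH vcH] ip_Dfun_nth[OF u vs \<open>c < length vs\<close>] by simp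
  qed
  moreover have "ip (fdiff u (fscale (1 / det (gram vs)) (Dfun ip u vs))) w = 0" if "w \<in> V" for w
  proof -
    have wH: "w \<in> H"
      using that V by auto
    have "ip (vs ! c) w = 0" if "c < length vs" for c
      using \<open>w \<in> V\<close> V that ip_commute[OF wH, of "vs ! c"] vs by (auto simp: nth_mem subset_iff)
    then have "ip (Dfun ip u vs) w = det (gram vs) * ip u w"
      by (rule ip_Dfun_orthogonal[OF u vs wH])
    then show ?thesis
      using G unfolding ip_diff_left[OF u H_scale[OF DH] wH] ip_scale_left[OF DH wH] by simp
  qed
  ultimately show ?thesis
    using proj_eqI[OF _ u] by blast
qed

lemma gram_singular_imp_dependent:
  assumes vs: "set vs \<subseteq> H" and "det (gram vs) = 0"
  obtains x where "\<exists>c<length vs. x c \<noteq> 0" "\<And>g. g \<in> H \<Longrightarrow> (\<Sum>c<length vs. x c * ip g (vs ! c)) = 0"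
proof -
  define N where "N = length vs"
  have vH: "vs ! c \<in> H" if "c < N" for c
    using vs that by (auto simp: N_def nth_mem subset_iff)
  have "gram vs \<in> carrier_mat N N"
    by (simp add: gram_def N_def)
  then obtain x where x: "x \<in> carrier_vec N" "x \<noteq> 0\<^sub>v N" "gram vs *\<^sub>v x = 0\<^sub>v N"
    using det_0_iff_vec_prod_zero_field \<open>det (gram vs) = 0\<close> by blast
  define y where "y = (\<lambda>z. \<Sum>c<N. cnj (x $ c) * (vs ! c) z)"
  have yH: "y \<in> H"
    unfolding y_def using vH by (intro sum_in_H) auto
  have ip_y: "ip g y = (\<Sum>c<N. x $ c * ip g (vs ! c))" if "g \<in> H" for g
    unfolding y_def using ip_sum_right[of "{..<N}" "\<lambda>c. vs ! c" g] vH that by simp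
  have "ip (vs ! r) y = 0" if "r < N" for r
  proof -
    have "ip (vs ! r) y = (gram vs *\<^sub>v x) $ r"
      using that x(1) vH ip_y
      by (simp add: gram_def N_def scalar_prod_def atLeast0LessThan mult.commute)
    then show ?thesis
      using x(3) that by simp
  qed
  moreover have "ip (\<lambda>z. \<Sum>c<N. cnj (x $ c) * (vs ! c) z) y = (\<Sum>c<N. cnj (x $ c) * ip (vs ! c) y)"
    using vH yH by (intro ip_sum_left) auto
  ultimately have "ip y y = 0"
    by (simp add: y_def[symmetric])
  then have "y = fzero"
    using ip_self_eq_0D yH by blast
  then have "(\<Sum>c<N. x $ c * ip g (vs ! c)) = 0" if "g \<in> H" for g
    using ip_y[OF that] that by simp
  moreover have "\<exists>c<N. x $ c \<noteq> 0"
    using x(1,2) by (auto intro: eq_vecI)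
  ultimately show ?thesis
    using that[of "\<lambda>c. x $ c"] by (simp add: N_def)
qed

lemma proj_eq_0_if_ip_eq_0:
  assumes V: "closed_subspace V" and k: "k \<in> H" and "ip (proj ip V k) k = 0"
  shows "proj ip V k = fzero"
proof -
  define v where "v = proj ip V k"
  have vH: "v \<in> H"
    using proj_in[OF V k] closed_subspaceD(1)[OF V] by (auto simp: v_def)
  have "ip (fdiff k v) v = 0"
    using proj_orthogonal[OF V k proj_in[OF V k]] by (simp add: v_def)
  then have "ip v (fdiff k v) = 0"
    using ip_commute[OF H_diff[OF k vH] vH] by simp
  then have "ip v v = 0"
    using ip_diff_right[OF vH k vH] assms(3) by (simp add: v_def)
  then show ?thesis
    using ip_self_eq_0D[OF vH] by (simp add: v_def)
qed

definition zero_pairs :: "complex multiset \<Rightarrow> (complex \<times> nat) list" where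
  "zero_pairs Z = (SOME xs. distinct xs \<and> set xs = {(\<beta>, j). \<beta> \<in># Z \<and> j < count Z \<beta>})"

lemma distinct_zero_pairs: "distinct (zero_pairs Z)"
  and set_zero_pairs: "set (zero_pairs Z) = {(\<beta>, j). \<beta> \<in># Z \<and> j < count Z \<beta>}"
proof -
  have "{(\<beta>, j). \<beta> \<in># Z \<and> j < count Z \<beta>} = Sigma (set_mset Z) (\<lambda>\<beta>. {..<count Z \<beta>})"
    by auto
  then have "finite {(\<beta>, j). \<beta> \<in># Z \<and> j < count Z \<beta>}"
    by simp
  then have "\<exists>xs. distinct xs \<and> set xs = {(\<beta>, j). \<beta> \<in># Z \<and> j < count Z \<beta>}"
    using finite_distinct_list by blast
  from someI_ex[OF this] show "distinct (zero_pairs Z)" "set (zero_pairs Z) = {(\<beta>, j). \<beta> \<in># Z \<and> j < count Z \<beta>}"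
    unfolding zero_pairs_def by blast+
qed

definition kernel_list :: "complex multiset \<Rightarrow> cfun list" where
  "kernel_list Z = map (\<lambda>(\<beta>, j). kern Om H ip \<beta> j) (zero_pairs Z)"

lemma SS_fun_eq_Dfun: "SS_fun Om H ip Z = Dfun ip (kern Om H ip 0 (count Z 0)) (kernel_list Z)"
  unfolding SS_fun_def kernel_list_def zero_pairs_def Let_def ..

lemma length_kernel_list: "length (kernel_list Z) = length (zero_pairs Z)"
  by (simp add: kernel_list_def)

lemma kernel_list_nth:
  "c < length (zero_pairs Z) \<Longrightarrow> kernel_list Z ! c = kern Om H ip (fst (zero_pairs Z ! c)) (snd (zero_pairs Z ! c))"
  by (simp add: kernel_list_def case_prod_beta)

lemma reproducible_zero_pairs_nth:
  "reproducible_multiset Om ip Z \<Longrightarrow> c < length (zero_pairs Z) \<Longrightarrow>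
    reproducible_order Om ip (fst (zero_pairs Z ! c)) (snd (zero_pairs Z ! c))"
  using nth_mem[of c "zero_pairs Z"] set_zero_pairs[of Z] by (auto simp: reproducible_multiset_iff)

lemma kernel_list_subset_H: "reproducible_multiset Om ip Z \<Longrightarrow> set (kernel_list Z) \<subseteq> H"
  by (auto simp: in_set_conv_nth length_kernel_list kernel_list_nth reproducible_zero_pairs_nth kern_in_H)

lemma vanishing_space_eq_orthogonal:
  assumes "reproducible_multiset Om ip Z"
  shows "vanishing_space Z = {f \<in> H. \<forall>c<length (kernel_list Z). ip f (kernel_list Z ! c) = 0}"
proof -
  have "(\<forall>\<beta> j. \<beta> \<in># Z \<longrightarrow> j < count Z \<beta> \<longrightarrow> P \<beta> j) \<longleftrightarrow> (\<forall>c<length (zero_pairs Z). P (fst (zero_pairs Z ! c)) (snd (zero_pairs Z ! c)))"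
    for P :: "complex \<Rightarrow> nat \<Rightarrow> bool"
  proof (intro iffI allI impI)
    fix c assume P: "\<forall>\<beta> j. \<beta> \<in># Z \<longrightarrow> j < count Z \<beta> \<longrightarrow> P \<beta> j" and "c < length (zero_pairs Z)"
    then have "zero_pairs Z ! c \<in> set (zero_pairs Z)"
      by simp
    then have "fst (zero_pairs Z ! c) \<in># Z" "snd (zero_pairs Z ! c) < count Z (fst (zero_pairs Z ! c))"
      by (simp_all add: set_zero_pairs case_prod_beta)
    then show "P (fst (zero_pairs Z ! c)) (snd (zero_pairs Z ! c))"
      using P by blast
  next
    fix \<beta> j assume P: "\<forall>c<length (zero_pairs Z). P (fst (zero_pairs Z ! c)) (snd (zero_pairs Z ! c))"
      and "\<beta> \<in># Z" "j < count Z \<beta>"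
    then have "(\<beta>, j) \<in> set (zero_pairs Z)"
      by (simp add: set_zero_pairs)
    then obtain c where "c < length (zero_pairs Z)" "zero_pairs Z ! c = (\<beta>, j)"
      by (auto simp: in_set_conv_nth)
    then show "P \<beta> j"
      using P by (metis fst_conv snd_conv)
  qed
  then show ?thesis
    by (simp add: vanishing_space_def deriv_at_def length_kernel_list kernel_list_nth)
qed

lemma gram_kernel_list_nonsingular:
  assumes Z: "reproducible_multiset Om ip Z"
  shows "det (gram (kernel_list Z)) \<noteq> 0"
proof
  assume "det (gram (kernel_list Z)) = 0"
  then obtain x where nontrivial: "\<exists>c<length (kernel_list Z). x c \<noteq> 0"
    and annih: "\<And>g. g \<in> H \<Longrightarrow> (\<Sum>c<length (kernel_list Z). x c * ip g (kernel_list Z ! c)) = 0"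
    using gram_singular_imp_dependent[OF kernel_list_subset_H[OF Z]] by blast
  have "(\<Sum>c<length (zero_pairs Z). x c * poly ((pderiv ^^ snd (zero_pairs Z ! c)) q) (fst (zero_pairs Z ! c))) = 0" for q
    using annih[OF polyfun_in_H, of q]
    by (simp add: length_kernel_list kernel_list_nth ip_polyfun_kern reproducible_zero_pairs_nth[OF Z])
  then have "x c = 0" if "c < length (zero_pairs Z)" for c
    using higher_pderiv_functionals_independent[OF distinct_zero_pairs _ that] by blast
  then show False
    using nontrivial unfolding length_kernel_list by blast
qed

definition proj_kern0 :: "complex multiset \<Rightarrow> cfun" where
  "proj_kern0 Z = proj ip (vanishing_space Z) (kern Om H ip 0 (count Z 0))"

lemma proj_kern0_in_vanishing_space: "reproducible_multiset Om ip Z \<Longrightarrow> proj_kern0 Z \<in> vanishing_space Z"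
  unfolding proj_kern0_def by (intro proj_in closed_subspace_vanishing_space kern_in_H zero_reproducible)

theorem SS_fun_eq_scaled_proj:
  assumes Z: "reproducible_multiset Om ip Z"
  shows "SS_fun Om H ip Z = fscale (det (gram (kernel_list Z))) (proj_kern0 Z)"
  using proj_eq_Dfun[OF kern_in_H[OF zero_reproducible] kernel_list_subset_H[OF Z]
      gram_kernel_list_nonsingular[OF Z] vanishing_space_eq_orthogonal[OF Z]]
    gram_kernel_list_nonsingular[OF Z]
  by (simp add: proj_kern0_def SS_fun_eq_Dfun)

text \<open>The projection of \<open>k\<^sub>0\<^sup>(\<^sup>m\<^sub>0\<^sup>)\<close> onto \<open>[p\<^sub>Z]\<close> never has an extra zero at \<open>0\<close>, since \<open>p\<^sub>Z\<close>
  has order exactly \<open>m\<^sub>0\<close> there.\<close>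
lemma deriv_at_proj_kern0_at_0:
  assumes Z: "reproducible_multiset Om ip Z"
  shows "deriv_at Om H ip (proj_kern0 Z) 0 (count Z 0) \<noteq> 0"
proof
  define k where "k = kern Om H ip 0 (count Z 0)"
  have V: "closed_subspace (vanishing_space Z)"
    using Z by (rule closed_subspace_vanishing_space)
  have kH: "k \<in> H"
    by (simp add: k_def kern_in_H zero_reproducible)
  assume "deriv_at Om H ip (proj_kern0 Z) 0 (count Z 0) = 0"
  then have "proj ip (vanishing_space Z) k = fzero"
    by (intro proj_eq_0_if_ip_eq_0[OF V kH]) (simp add: deriv_at_def proj_kern0_def k_def)
  moreover have "polyfun Om (root_poly Z) \<in> vanishing_space Z"
    using polyfun_mult_root_poly_in_vanishing_space[OF Z, of 1] by simp
  ultimately have "ip k (polyfun Om (root_poly Z)) = 0"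
    using proj_orthogonal[OF V kH] by fastforce
  then have "poly ((pderiv ^^ count Z 0) (root_poly Z)) 0 = 0"
    using ip_commute[OF kH polyfun_in_H] by (simp add: k_def ip_polyfun_kern zero_reproducible)
  then show False
    using poly_higher_pderiv_order(2)[OF root_poly_nonzero, of 0 Z] by (simp add: order_root_poly)
qed

text \<open>An extraneous zero of \<open>S\<^sub>Z\<close> at \<open>\<beta>\<close> means exactly that the projection of \<open>k\<^sub>0\<^sup>(\<^sup>m\<^sub>0\<^sup>)\<close> onto
  \<open>[p\<^sub>Z]\<close> already lies in the smaller space \<open>[p\<^sub>Z\<^sub>+\<^sub>\<beta>]\<close>.\<close>
lemma extraneous_zero_iff:
  assumes Z: "reproducible_multiset Om ip Z"
  shows "(reproducible Om ip \<beta> \<and>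
      ((\<beta> \<notin># Z \<and> deriv_at Om H ip (SS_fun Om H ip Z) \<beta> 0 = 0) \<or>
       (\<exists>m. count Z \<beta> = m \<and> reproducible_order Om ip \<beta> m \<and> deriv_at Om H ip (SS_fun Om H ip Z) \<beta> m = 0)))
    \<longleftrightarrow> reproducible_order Om ip \<beta> (count Z \<beta>) \<and> proj_kern0 Z \<in> vanishing_space (add_mset \<beta> Z)"
proof -
  have projH: "proj_kern0 Z \<in> H"
    using proj_kern0_in_vanishing_space[OF Z] by (simp add: vanishing_space_def)
  have "deriv_at Om H ip (SS_fun Om H ip Z) \<beta> m = 0 \<longleftrightarrow> deriv_at Om H ip (proj_kern0 Z) \<beta> m = 0"
    if "reproducible_order Om ip \<beta> m" for m
  proof -
    show ?thesis
      using projH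
      using gram_kernel_list_nonsingular[OF Z] ip_scale_left[OF _ kern_in_H[OF that]]
      by (simp add: SS_fun_eq_scaled_proj[OF Z] deriv_at_def)
  qed
  moreover have "reproducible_order Om ip \<beta> (count Z \<beta>) \<Longrightarrow> reproducible Om ip \<beta>"
    by (simp add: reproducible_def reproducible_order_le)
  ultimately show ?thesis
    using proj_kern0_in_vanishing_space[OF Z] projH
    by (auto simp: vanishing_space_add_mset reproducible_def not_in_iff)
qed

lemma extraneous_zero_if_proj_kern0_eq:
  assumes Z1: "reproducible_multiset Om ip Z1" and Z2: "reproducible_multiset Om ip Z2"
    and eq: "proj_kern0 Z1 = proj_kern0 Z2" and less: "count Z1 \<beta> < count Z2 \<beta>"
  shows "reproducible_order Om ip \<beta> (count Z1 \<beta>) \<and> proj_kern0 Z1 \<in> vanishing_space (add_mset \<beta> Z1)"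
proof -
  have "\<beta> \<in># Z2"
    using less by (simp add: count_inI)
  then have "reproducible_order Om ip \<beta> (count Z1 \<beta>)"
    using Z2 less by (simp add: reproducible_multiset_iff)
  moreover have "proj_kern0 Z1 \<in> vanishing_space Z2"
    using eq proj_kern0_in_vanishing_space[OF Z2] by simp
  then have "deriv_at Om H ip (proj_kern0 Z1) \<beta> (count Z1 \<beta>) = 0"
    using less \<open>\<beta> \<in># Z2\<close> by (simp add: vanishing_space_def)
  moreover have "proj_kern0 Z1 \<in> H"
    using proj_kern0_in_vanishing_space[OF Z1] by (simp add: vanishing_space_def)
  ultimately show ?thesis
    using proj_kern0_in_vanishing_space[OF Z1] by (simp add: vanishing_space_add_mset)
qed

lemma no_extraneous_zeros_iff:
  "(\<forall>Z. reproducible_multiset Om ip Z \<longrightarrow>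
      \<not> (\<exists>\<beta>. reproducible Om ip \<beta> \<and>
        ((\<beta> \<notin># Z \<and> deriv_at Om H ip (SS_fun Om H ip Z) \<beta> 0 = 0) \<or>
         (\<exists>m. count Z \<beta> = m \<and> reproducible_order Om ip \<beta> m \<and>
            deriv_at Om H ip (SS_fun Om H ip Z) \<beta> m = 0))))
    \<longleftrightarrow> (\<forall>Z \<beta>. reproducible_multiset Om ip Z \<longrightarrow>
      \<not> (reproducible_order Om ip \<beta> (count Z \<beta>) \<and> proj_kern0 Z \<in> vanishing_space (add_mset \<beta> Z)))"
  using extraneous_zero_iff by blast

lemma invsub_eq_if_proj_kern_eq:
  assumes no_extraneous: "\<forall>Z \<beta>. reproducible_multiset Om ip Z \<longrightarrow>
      \<not> (reproducible_order Om ip \<beta> (count Z \<beta>) \<and> proj_kern0 Z \<in> vanishing_space (add_mset \<beta> Z))"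
  shows "\<forall>p q :: complex poly. p \<noteq> 0 \<longrightarrow> q \<noteq> 0 \<longrightarrow>
      proj ip (invsub H ip (polyfun Om p)) (kern Om H ip 0 (order 0 p)) =
      proj ip (invsub H ip (polyfun Om q)) (kern Om H ip 0 (order 0 q)) \<longrightarrow>
      invsub H ip (polyfun Om p) = invsub H ip (polyfun Om q)"
proof (intro allI impI)
  fix p q :: "complex poly"
  assume "p \<noteq> 0" "q \<noteq> 0"
    and eq: "proj ip (invsub H ip (polyfun Om p)) (kern Om H ip 0 (order 0 p)) =
      proj ip (invsub H ip (polyfun Om q)) (kern Om H ip 0 (order 0 q))"
  obtain Zp where Zp: "reproducible_multiset Om ip Zp" "count Zp 0 = order 0 p"
    and "invsub H ip (polyfun Om p) = invsub H ip (polyfun Om (root_poly Zp))"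
    by (rule invsub_eq_invsub_root_poly[OF \<open>p \<noteq> 0\<close>])
  then have p: "invsub H ip (polyfun Om p) = vanishing_space Zp"
    by (simp add: invsub_root_poly)
  obtain Zq where Zq: "reproducible_multiset Om ip Zq" "count Zq 0 = order 0 q"
    and "invsub H ip (polyfun Om q) = invsub H ip (polyfun Om (root_poly Zq))"
    by (rule invsub_eq_invsub_root_poly[OF \<open>q \<noteq> 0\<close>])
  then have q: "invsub H ip (polyfun Om q) = vanishing_space Zq"
    by (simp add: invsub_root_poly)
  have proj_eq: "proj_kern0 Zp = proj_kern0 Zq"
    using eq by (simp add: proj_kern0_def p q Zp(2) Zq(2))
  have "count Zp \<beta> = count Zq \<beta>" for \<beta>
  proof (rule ccontr)
    assume "count Zp \<beta> \<noteq> count Zq \<beta>"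
    then consider "count Zp \<beta> < count Zq \<beta>" | "count Zq \<beta> < count Zp \<beta>"
      by linarith
    then show False
    proof cases
      case 1
      then show False
        using extraneous_zero_if_proj_kern0_eq[OF Zp(1) Zq(1) proj_eq] no_extraneous Zp(1) by blast
    next
      case 2
      then show False
        using extraneous_zero_if_proj_kern0_eq[OF Zq(1) Zp(1) proj_eq[symmetric]] no_extraneous Zq(1) by blast
    qed
  qed
  then have "Zp = Zq"
    by (rule multiset_eqI)
  then show "invsub H ip (polyfun Om p) = invsub H ip (polyfun Om q)"
    using p q by simp
qed

text \<open>Conversely, an extraneous zero \<open>\<beta>\<close> of \<open>S\<^sub>Z\<close> makes \<open>[p\<^sub>Z]\<close> and the strictly smaller
  \<open>[(z - \<beta>) p\<^sub>Z]\<close> have the same projection of \<open>k\<^sub>0\<^sup>(\<^sup>m\<^sub>0\<^sup>)\<close>.\<close>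
lemma no_extraneous_zero_if_proj_kern_injective:
  assumes inj: "\<forall>p q :: complex poly. p \<noteq> 0 \<longrightarrow> q \<noteq> 0 \<longrightarrow>
      proj ip (invsub H ip (polyfun Om p)) (kern Om H ip 0 (order 0 p)) =
      proj ip (invsub H ip (polyfun Om q)) (kern Om H ip 0 (order 0 q)) \<longrightarrow>
      invsub H ip (polyfun Om p) = invsub H ip (polyfun Om q)"
  shows "\<forall>Z \<beta>. reproducible_multiset Om ip Z \<longrightarrow>
      \<not> (reproducible_order Om ip \<beta> (count Z \<beta>) \<and> proj_kern0 Z \<in> vanishing_space (add_mset \<beta> Z))"
proof (intro allI impI notI)
  fix Z \<beta>
  assume Z: "reproducible_multiset Om ip Z"
    and "reproducible_order Om ip \<beta> (count Z \<beta>) \<and> proj_kern0 Z \<in> vanishing_space (add_mset \<beta> Z)"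
  then have repr: "reproducible_order Om ip \<beta> (count Z \<beta>)"
    and extraneous: "proj_kern0 Z \<in> vanishing_space (add_mset \<beta> Z)"
    by simp_all
  define Z' where "Z' = add_mset \<beta> Z"
  have Z': "reproducible_multiset Om ip Z'"
    using Z repr by (simp add: Z'_def reproducible_multiset_add_mset)
  have "\<beta> \<noteq> 0"
    using extraneous deriv_at_proj_kern0_at_0[OF Z] by (auto simp: vanishing_space_add_mset)
  then have count_0: "count Z' 0 = count Z 0"
    by (simp add: Z'_def)
  have kH: "kern Om H ip 0 (count Z 0) \<in> H"
    by (simp add: kern_in_H zero_reproducible)
  have "vanishing_space Z' \<subseteq> vanishing_space Z"
    by (simp add: Z'_def vanishing_space_add_mset)
  then have "proj_kern0 Z' = proj_kern0 Z"
    unfolding proj_kern0_def count_0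
    using extraneous proj_orthogonal[OF closed_subspace_vanishing_space[OF Z] kH]
    by (intro proj_eqI[OF closed_subspace_vanishing_space[OF Z'] kH]) (auto simp: Z'_def proj_kern0_def)
  then have "proj ip (invsub H ip (polyfun Om (root_poly Z))) (kern Om H ip 0 (order 0 (root_poly Z))) =
      proj ip (invsub H ip (polyfun Om (root_poly Z'))) (kern Om H ip 0 (order 0 (root_poly Z')))"
    by (simp add: invsub_root_poly[OF Z] invsub_root_poly[OF Z'] order_root_poly proj_kern0_def count_0)
  then have "invsub H ip (polyfun Om (root_poly Z)) = invsub H ip (polyfun Om (root_poly Z'))"
    by (rule inj[rule_format, OF root_poly_nonzero root_poly_nonzero])
  then have "vanishing_space Z = vanishing_space Z'"
    by (simp add: invsub_root_poly[OF Z] invsub_root_poly[OF Z'])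
  moreover have "polyfun Om (root_poly Z) \<in> vanishing_space Z"
    using polyfun_mult_root_poly_in_vanishing_space[OF Z, of 1] by simp
  ultimately have "deriv_at Om H ip (polyfun Om (root_poly Z)) \<beta> (count Z \<beta>) = 0"
    by (auto simp: Z'_def vanishing_space_add_mset)
  moreover have "poly ((pderiv ^^ count Z \<beta>) (root_poly Z)) \<beta> \<noteq> 0"
    using poly_higher_pderiv_order(2)[OF root_poly_nonzero, of \<beta> Z] by (simp add: order_root_poly)
  ultimately show False
    using repr by (simp add: deriv_at_polyfun)
qed

end

theorem mainTheorem14:
  fixes Om :: "complex set" and H :: "(complex \<Rightarrow> complex) set"
    and ip :: "(complex \<Rightarrow> complex) \<Rightarrow> (complex \<Rightarrow> complex) \<Rightarrow> complex"
  assumes "setting Om H ip"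
  shows "(\<forall>Z. reproducible_multiset Om ip Z \<longrightarrow>
            \<not> (\<exists>\<beta>. reproducible Om ip \<beta> \<and>
                 ((\<beta> \<notin># Z \<and> deriv_at Om H ip (SS_fun Om H ip Z) \<beta> 0 = 0) \<or>
                  (\<exists>m. count Z \<beta> = m \<and> reproducible_order Om ip \<beta> m \<and>
                       deriv_at Om H ip (SS_fun Om H ip Z) \<beta> m = 0))))
     \<longleftrightarrow>
         (\<forall>p q :: complex poly. p \<noteq> 0 \<longrightarrow> q \<noteq> 0 \<longrightarrow>
            proj ip (invsub H ip (polyfun Om p)) (kern Om H ip 0 (order 0 p)) =
            proj ip (invsub H ip (polyfun Om q)) (kern Om H ip 0 (order 0 q)) \<longrightarrow>
            invsub H ip (polyfun Om p) = invsub H ip (polyfun Om q))"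
proof -
  interpret function_hilbert_space Om H ip
    using assms by (rule function_hilbert_space.intro)
  show ?thesis
    unfolding no_extraneous_zeros_iff
    using invsub_eq_if_proj_kern_eq no_extraneous_zero_if_proj_kern_injective by blast
qed

end
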